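(* Let $f$, $X_n$, $X$, $Y_m$, $Y$ be as in the context, and let $n\geq 2$ (equivalently $f(n)\geq 2$). Then every coarse $(f(n)-1)$-wiring of $X_n$ into $Y$ has volume at least $2\cdot 2^{2^{2n+1}}+1$. Consequently \[ \mathrm{wir}^{f(n)-1}_{X\to Y}\big(|VX_n|\big)\;\geq\; 2^{2^{2n+1}}\;\geq\;\left(\frac{|VX_n|}{f(n)(f(n)+1)}\right)^2, \] where $|VX_n|=(2^{2^{2n}}f(n)+1)f(n)$.
   Context: Fix a function $f:\mathbb{N}\to\mathbb{N}$ (with $\mathbb{N}=\{1,2,\dots\}$) that is surjective, satisfies $f(1)=1$, $2\leq f(n)\leq n$ for all $n\geq 2$, and $|f^{-1}(k)|=\infty$ for every $k\geq 2$. For $n\in\mathbb{N}$ let $X_n$ be the graph with vertex set $\{0,1,\dots,f(n)-1\}\times\{0,1,\dots,2^{2^{2n}}f(n)\}$, with edges $(i,j)(i,j+1)$ for all $0\leq i\leq f(n)-1$, $0\leq j\leq 2^{2^{2n}}f(n)-1$ ("vertical" edges), and $(i,j)(i+1,j)$ for all $0\leq i\leq f(n)-2$ and all $j$ that are multiples of $2^{2^{2n}}$ (including $0$) ("horizontal" edges). Let $Y_n$ be defined in the same way with $2^{2^{2n}}$ replaced everywhere by $2^{2^{2n+1}}$: vertex set $\{0,\dots,f(n)-1\}\times\{0,\dots,2^{2^{2n+1}}f(n)\}$, vertical edges $(i,j)(i,j+1)$, horizontal edges $(i,j)(i+1,j)$ for $j$ a multiple of $2^{2^{2n+1}}$. Let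 $X=\bigsqcup_{n\geq1}X_n$ and $Y=\bigsqcup_{n\geq 1}Y_n$ (disjoint unions). A wiring of a finite graph $\Gamma$ into a graph $Y$ is a continuous map $g:\Gamma\to Y$ sending vertices to vertices and each edge onto a union of edges (a path between the images of its endpoints, or a single vertex if these coincide). It is a coarse $k$-wiring if each vertex of $Y$ has at most $k$ preimage vertices and each edge of $Y$ is contained in the images of at most $k$ edges of $\Gamma$. Its volume is the number of vertices in its image. $\mathrm{wir}^k(\Gamma\to Y)$ is the minimal volume of a coarse $k$-wiring ($+\infty$ if none), and $\mathrm{wir}^k_{X\to Y}(n)=\max\{\mathrm{wir}^k(\Gamma\to Y):\Gamma\subseteq X,\ |V\Gamma|\leq n\}$. *)

theory Defs
  imports Complex_Main "HOL-Library.Extended_Nat"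
begin

type_synonym 'v graph = "'v set \<times> 'v set set"

definition verts :: "'v graph \<Rightarrow> 'v set" where "verts G = fst G"
definition edges :: "'v graph \<Rightarrow> 'v set set" where "edges G = snd G"

text \<open>The ladder-like graph with f(n) columns of height L*f(n), and horizontal rungs
  at heights that are multiples of L.\<close>
definition ladder :: "(nat \<Rightarrow> nat) \<Rightarrow> nat \<Rightarrow> nat \<Rightarrow> (nat \<times> nat) graph" where
  "ladder f L n =
    ({(i, j). i < f n \<and> j \<le> L * f n},
     {{(i, j), (i, j + 1)} | i j. i < f n \<and> j < L * f n} \<union>
     {{(i, j), (i + 1, j)} | i j. i + 1 < f n \<and> j \<le> L * f n \<and> L dvd j})"

definition Xn :: "(nat \<Rightarrow> nat) \<Rightarrow> nat \<Rightarrow> (nat \<times> nat) graph" where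
  "Xn f n = ladder f (2 ^ 2 ^ (2 * n)) n"

definition Yn :: "(nat \<Rightarrow> nat) \<Rightarrow> nat \<Rightarrow> (nat \<times> nat) graph" where
  "Yn f n = ladder f (2 ^ 2 ^ (2 * n + 1)) n"

definition dunion :: "(nat \<Rightarrow> 'v graph) \<Rightarrow> (nat \<times> 'v) graph" where
  "dunion G = ({(n, v) | n v. 1 \<le> n \<and> v \<in> verts (G n)},
               {(\<lambda>v. (n, v)) ` e | n e. 1 \<le> n \<and> e \<in> edges (G n)})"

definition Xg :: "(nat \<Rightarrow> nat) \<Rightarrow> (nat \<times> nat \<times> nat) graph" where
  "Xg f = dunion (Xn f)"

definition Yg :: "(nat \<Rightarrow> nat) \<Rightarrow> (nat \<times> nat \<times> nat) graph" where
  "Yg f = dunion (Yn f)"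

definition path_edges :: "'v list \<Rightarrow> 'v set set" where
  "path_edges xs = {{xs ! i, xs ! Suc i} | i. Suc i < length xs}"

definition is_path :: "'v graph \<Rightarrow> 'v list \<Rightarrow> bool" where
  "is_path G xs \<longleftrightarrow> xs \<noteq> [] \<and> distinct xs \<and> set xs \<subseteq> verts G \<and> path_edges xs \<subseteq> edges G"

text \<open>A wiring: a vertex map \<phi> and, for each edge e, a path P e in the target joining the
  images of the endpoints of e (a single vertex if they coincide).\<close>
definition wiring :: "'a graph \<Rightarrow> 'b graph \<Rightarrow> ('a \<Rightarrow> 'b) \<Rightarrow> ('a set \<Rightarrow> 'b list) \<Rightarrow> bool" where
  "wiring \<Gamma> G \<phi> P \<longleftrightarrow>
     (\<forall>v\<in>verts \<Gamma>. \<phi> v \<in> verts G) \<and>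
     (\<forall>e\<in>edges \<Gamma>. is_path G (P e) \<and> {hd (P e), last (P e)} = \<phi> ` e)"

definition coarse_wiring :: "nat \<Rightarrow> 'a graph \<Rightarrow> 'b graph \<Rightarrow> ('a \<Rightarrow> 'b) \<Rightarrow> ('a set \<Rightarrow> 'b list) \<Rightarrow> bool" where
  "coarse_wiring k \<Gamma> G \<phi> P \<longleftrightarrow> wiring \<Gamma> G \<phi> P \<and>
     (\<forall>y\<in>verts G. card {v \<in> verts \<Gamma>. \<phi> v = y} \<le> k) \<and>
     (\<forall>\<epsilon>\<in>edges G. card {e \<in> edges \<Gamma>. \<epsilon> \<in> path_edges (P e)} \<le> k)"

definition wiring_volume :: "'a graph \<Rightarrow> ('a \<Rightarrow> 'b) \<Rightarrow> ('a set \<Rightarrow> 'b list) \<Rightarrow> nat" where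
  "wiring_volume \<Gamma> \<phi> P = card (\<phi> ` verts \<Gamma> \<union> (\<Union>e\<in>edges \<Gamma>. set (P e)))"

definition wir :: "nat \<Rightarrow> 'a graph \<Rightarrow> 'b graph \<Rightarrow> enat" where
  "wir k \<Gamma> G = (INF w \<in> {(\<phi>, P). coarse_wiring k \<Gamma> G \<phi> P}. enat (wiring_volume \<Gamma> (fst w) (snd w)))"

definition subgraph :: "'v graph \<Rightarrow> 'v graph \<Rightarrow> bool" where
  "subgraph \<Gamma> G \<longleftrightarrow> verts \<Gamma> \<subseteq> verts G \<and> edges \<Gamma> \<subseteq> edges G \<and> (\<forall>e\<in>edges \<Gamma>. e \<subseteq> verts \<Gamma>)"

definition wir_fun :: "nat \<Rightarrow> 'a graph \<Rightarrow> 'b graph \<Rightarrow> nat \<Rightarrow> enat" where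
  "wir_fun k X Y m = (SUP \<Gamma> \<in> {\<Gamma>. subgraph \<Gamma> X \<and> finite (verts \<Gamma>) \<and> card (verts \<Gamma>) \<le> m}. wir k \<Gamma> Y)"

end

theory Submission
  imports Defs
begin

text \<open>Suppose a coarse \<open>(F - 1)\<close>-wiring of \<open>X\<^sub>n\<close>, where \<open>F = f n\<close>, has an image \<open>I\<close> of at most
  \<open>2 M\<close> vertices, \<open>M = 2 ^ 2 ^ (2 n + 1)\<close>. The image is connected, so it lies in one component
  \<open>Y\<^sub>m\<close>, and \<open>m \<ge> n\<close> because \<open>X\<^sub>n\<close> is too large to be squeezed into the smaller components.
  Every cycle of \<open>Y\<^sub>m\<close> has more than \<open>2 M\<close> vertices, so \<open>I\<close> induces a tree. Pulling back
  the two sides of a tree edge splits \<open>X\<^sub>n\<close> with fewer than \<open>F\<close> boundary edges (the congestion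
  bound); by isoperimetry in the ladder at most one side then contains a full column, and a side
  without one has at most \<open>L F\<^sup>2 / 4\<close> vertices, \<open>L = 2 ^ 2 ^ (2 n)\<close>. Moving along tree edges
  towards sides with a full column ends at a vertex all of whose (at most four) sides are small;
  with the fibre over that vertex they cover the \<open>F (L F + 1)\<close> vertices of \<open>X\<^sub>n\<close>, which is
  impossible.\<close>

definition ladder_verts :: "nat \<Rightarrow> nat \<Rightarrow> (nat \<times> nat) set" where
  "ladder_verts F L = {(i, j). i < F \<and> j \<le> L * F}"

definition ladder_edges :: "nat \<Rightarrow> nat \<Rightarrow> (nat \<times> nat) set set" where
  "ladder_edges F L = {{(i, j), (i, j + 1)} | i j. i < F \<and> j < L * F} \<union>
     {{(i, j), (i + 1, j)} | i j. i + 1 < F \<and> j \<le> L * F \<and> L dvd j}"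

lemma ladder_eq: "ladder f L n = (ladder_verts (f n) L, ladder_edges (f n) L)"
  by (simp add: ladder_def ladder_verts_def ladder_edges_def)

lemma ladder_verts_eq: "ladder_verts F L = {..<F} \<times> {..L * F}"
  by (auto simp: ladder_verts_def)

lemma finite_ladder_verts: "finite (ladder_verts F L)"
  by (simp add: ladder_verts_eq)

lemma card_ladder_verts: "card (ladder_verts F L) = F * (L * F + 1)"
  by (simp add: ladder_verts_eq card_cartesian_product)

lemma ladder_edge_subset: "e \<in> ladder_edges F L \<Longrightarrow> e \<subseteq> ladder_verts F L"
  by (auto simp: ladder_edges_def ladder_verts_def)

lemma finite_ladder_edges: "finite (ladder_edges F L)"
proof (rule finite_subset)
  show "ladder_edges F L \<subseteq> Pow (ladder_verts F L)"
    using ladder_edge_subset by blast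
qed (simp add: finite_ladder_verts)

lemma ladder_vertical_edge: "i < F \<Longrightarrow> j < L * F \<Longrightarrow> {(i, j), (i, Suc j)} \<in> ladder_edges F L"
  unfolding ladder_edges_def by fastforce

lemma ladder_rung_edge:
  "Suc i < F \<Longrightarrow> j \<le> L * F \<Longrightarrow> L dvd j \<Longrightarrow> {(i, j), (Suc i, j)} \<in> ladder_edges F L"
  unfolding ladder_edges_def by fastforce


section \<open>Isoperimetry in the ladder\<close>

lemma nat_pred_changes_between:
  fixes p :: "nat \<Rightarrow> bool"
  assumes "a \<le> b" "p a \<noteq> p b"
  shows "\<exists>x. a \<le> x \<and> x < b \<and> p x \<noteq> p (Suc x)"
  using assms
proof (induction b rule: dec_induct)
  case (step b)
  then show ?case by (cases "p a = p b") (auto intro: less_SucI)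
qed simp

lemma nat_pred_changes_between':
  fixes p :: "nat \<Rightarrow> bool"
  assumes "p a \<noteq> p b"
  shows "\<exists>x. min a b \<le> x \<and> x < max a b \<and> p x \<noteq> p (Suc x)"
  using nat_pred_changes_between[of a b p] nat_pred_changes_between[of b a p] assms
  by (cases "a \<le> b") auto

definition edge_boundary :: "'v set set \<Rightarrow> 'v set \<Rightarrow> 'v set set" where
  "edge_boundary E S = {e \<in> E. \<exists>x\<in>e. \<exists>y\<in>e. x \<in> S \<and> y \<notin> S}"

text \<open>Boundary edges of \<open>S\<close> in the ladder, vertical ones by their lower endpoint \<open>(c, h)\<close>
  and rungs by their left column \<open>c\<close> and rung number \<open>k\<close>.\<close>

definition vertical_boundary :: "nat \<Rightarrow> nat \<Rightarrow> (nat \<times> nat) set \<Rightarrow> (nat \<times> nat) set" where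
  "vertical_boundary F L S = {(c, h). c < F \<and> h < L * F \<and> ((c, h) \<in> S) \<noteq> ((c, Suc h) \<in> S)}"

definition rung_boundary :: "nat \<Rightarrow> nat \<Rightarrow> (nat \<times> nat) set \<Rightarrow> (nat \<times> nat) set" where
  "rung_boundary F L S = {(c, k). Suc c < F \<and> k \<le> F \<and> ((c, k * L) \<in> S) \<noteq> ((Suc c, k * L) \<in> S)}"

lemma finite_vertical_boundary: "finite (vertical_boundary F L S)"
  by (rule finite_subset[of _ "{..<F} \<times> {..<L * F}"]) (auto simp: vertical_boundary_def)

lemma finite_rung_boundary: "finite (rung_boundary F L S)"
  by (rule finite_subset[of _ "{..<F} \<times> {..F}"]) (auto simp: rung_boundary_def)

lemma card_vertical_rung_boundary_le:
  assumes "L \<ge> 1"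
  shows "card (vertical_boundary F L S) + card (rung_boundary F L S)
           \<le> card (edge_boundary (ladder_edges F L) S)"
proof -
  define vert where "vert = (\<lambda>(c::nat, h::nat). {(c, h), (c, Suc h)})"
  define rung where "rung = (\<lambda>(c::nat, k::nat). {(c, k * L), (Suc c, k * L)})"
  have "inj_on vert (vertical_boundary F L S)"
    unfolding inj_on_def vert_def by (clarsimp simp: doubleton_eq_iff)
  moreover have "inj_on rung (rung_boundary F L S)"
    using assms unfolding inj_on_def rung_def by (clarsimp simp: doubleton_eq_iff)
  moreover have "vert ` vertical_boundary F L S \<inter> rung ` rung_boundary F L S = {}"
    unfolding vert_def rung_def by (force simp: doubleton_eq_iff)
  ultimately have "card (vertical_boundary F L S) + card (rung_boundary F L S)
      = card (vert ` vertical_boundary F L S \<union> rung ` rung_boundary F L S)"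
    by (simp add: card_Un_disjoint finite_vertical_boundary finite_rung_boundary card_image)
  also have "\<dots> \<le> card (edge_boundary (ladder_edges F L) S)"
  proof (rule card_mono)
    show "finite (edge_boundary (ladder_edges F L) S)"
      using finite_ladder_edges by (simp add: edge_boundary_def)
    have "k * L \<le> L * F" if "k \<le> F" for k
      using that by (simp add: mult.commute)
    then show "vert ` vertical_boundary F L S \<union> rung ` rung_boundary F L S
        \<subseteq> edge_boundary (ladder_edges F L) S"
      unfolding vert_def rung_def vertical_boundary_def rung_boundary_def edge_boundary_def
      by (fastforce intro: ladder_vertical_edge ladder_rung_edge)
  qed
  finally show ?thesis .
qed

text \<open>A set with fewer than \<open>F\<close> boundary edges that contains a whole column contains a whole
  rung level: otherwise each of the \<open>F + 1\<close> rung levels would contribute a boundary rung.\<close>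

lemma full_column_imp_full_rung:
  assumes "L \<ge> 1" and boundary: "card (edge_boundary (ladder_edges F L) S) < F"
    and "c0 < F" and full: "\<forall>h\<le>L * F. (c0, h) \<in> S"
  shows "\<exists>k\<le>F. \<forall>c<F. (c, k * L) \<in> S"
proof (rule ccontr)
  assume "\<not> ?thesis"
  then have gap: "\<forall>k\<le>F. \<exists>c<F. (c, k * L) \<notin> S" by blast
  have "{..F} \<subseteq> snd ` rung_boundary F L S"
  proof
    fix k assume "k \<in> {..F}"
    with gap obtain c where c: "c < F" "(c, k * L) \<notin> S" by auto
    have "(c0, k * L) \<in> S"
      using full \<open>k \<in> {..F}\<close> by (simp add: mult.commute)
    with c obtain x where "min c c0 \<le> x" "x < max c c0" "((x, k * L) \<in> S) \<noteq> ((Suc x, k * L) \<in> S)"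
      using nat_pred_changes_between'[of "\<lambda>x. (x, k * L) \<in> S" c c0] by auto
    then have "(x, k) \<in> rung_boundary F L S"
      using \<open>c < F\<close> \<open>c0 < F\<close> \<open>k \<in> {..F}\<close> by (simp add: rung_boundary_def)
    then show "k \<in> snd ` rung_boundary F L S" by force
  qed
  then have "card {..F} \<le> card (rung_boundary F L S)"
    by (meson card_image_le card_mono finite_imageI finite_rung_boundary le_trans)
  also have "\<dots> \<le> card (edge_boundary (ladder_edges F L) S)"
    using card_vertical_rung_boundary_le[OF \<open>L \<ge> 1\<close>] by (meson le_add2 le_trans)
  finally show False using boundary by simp
qed

lemma card_columns_meeting_le:
  assumes "S \<subseteq> ladder_verts F L" and no_full_column: "\<forall>c<F. \<exists>h\<le>L * F. (c, h) \<notin> S"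
  shows "card {c. c < F \<and> (\<exists>h. (c, h) \<in> S)} \<le> card (vertical_boundary F L S)"
proof -
  have "{c. c < F \<and> (\<exists>h. (c, h) \<in> S)} \<subseteq> fst ` vertical_boundary F L S"
  proof
    fix c assume "c \<in> {c. c < F \<and> (\<exists>h. (c, h) \<in> S)}"
    then obtain h where "c < F" "(c, h) \<in> S" by blast
    moreover have "h \<le> L * F" using \<open>(c, h) \<in> S\<close> assms(1) by (auto simp: ladder_verts_def)
    moreover obtain h' where "h' \<le> L * F" "(c, h') \<notin> S" using no_full_column \<open>c < F\<close> by blast
    ultimately obtain x where "x < max h h'" "((c, x) \<in> S) \<noteq> ((c, Suc x) \<in> S)"
      using nat_pred_changes_between'[of "\<lambda>x. (c, x) \<in> S" h h'] by auto
    moreover have "x < L * F" using \<open>x < max h h'\<close> \<open>h \<le> L * F\<close> \<open>h' \<le> L * F\<close> by linarith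
    ultimately have "(c, x) \<in> vertical_boundary F L S" using \<open>c < F\<close> by (simp add: vertical_boundary_def)
    then show "c \<in> fst ` vertical_boundary F L S" by force
  qed
  then show ?thesis
    by (meson card_image_le card_mono finite_imageI finite_vertical_boundary le_trans)
qed

lemma card_rung_levels_meeting_le:
  assumes "S \<subseteq> ladder_verts F L" and no_full_rung: "\<forall>k\<le>F. \<exists>c<F. (c, k * L) \<notin> S"
  shows "card {k. k \<le> F \<and> (\<exists>c. (c, k * L) \<in> S)} \<le> card (rung_boundary F L S)"
proof -
  have "{k. k \<le> F \<and> (\<exists>c. (c, k * L) \<in> S)} \<subseteq> snd ` rung_boundary F L S"
  proof
    fix k assume "k \<in> {k. k \<le> F \<and> (\<exists>c. (c, k * L) \<in> S)}"
    then obtain c where "k \<le> F" "(c, k * L) \<in> S" by blast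
    moreover have "c < F" using \<open>(c, k * L) \<in> S\<close> assms(1) by (auto simp: ladder_verts_def)
    moreover obtain c' where "c' < F" "(c', k * L) \<notin> S" using no_full_rung \<open>k \<le> F\<close> by blast
    ultimately obtain x where "x < max c c'" "((x, k * L) \<in> S) \<noteq> ((Suc x, k * L) \<in> S)"
      using nat_pred_changes_between'[of "\<lambda>x. (x, k * L) \<in> S" c c'] by auto
    moreover have "Suc x < F" using \<open>x < max c c'\<close> \<open>c < F\<close> \<open>c' < F\<close> by linarith
    ultimately have "(x, k) \<in> rung_boundary F L S" using \<open>k \<le> F\<close> by (simp add: rung_boundary_def)
    then show "k \<in> snd ` rung_boundary F L S" by force
  qed
  then show ?thesis
    by (meson card_image_le card_mono finite_imageI finite_rung_boundary le_trans)
qed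

definition rung_hits :: "nat \<Rightarrow> nat \<Rightarrow> (nat \<times> nat) set \<Rightarrow> (nat \<times> nat) set" where
  "rung_hits F L S = {(c, k). c < F \<and> k \<le> F \<and> (c, k * L) \<in> S}"

definition column_gap :: "nat \<Rightarrow> nat \<Rightarrow> nat \<Rightarrow> (nat \<times> nat) set" where
  "column_gap L c g = (\<lambda>d. (c, g * L + d)) ` {1..<L}"

lemma finite_rung_hits: "finite (rung_hits F L S)"
  by (rule finite_subset[of _ "{..<F} \<times> {..F}"]) (auto simp: rung_hits_def)

lemma card_column_gap_le: "card (column_gap L c g) \<le> L - 1"
  unfolding column_gap_def using card_image_le[of "{1..<L}"] by simp

text \<open>A point of \<open>S\<close> strictly between two rung heights either sees a boundary edge in its
  column gap, or the whole gap below it lies in \<open>S\<close> down to the lower rung height.\<close>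

lemma ladder_set_cover:
  assumes "L \<ge> 1" and S: "S \<subseteq> ladder_verts F L"
  shows "S \<subseteq> (\<lambda>(c, k). (c, k * L)) ` rung_hits F L S
           \<union> (\<Union>p\<in>vertical_boundary F L S. column_gap L (fst p) (snd p div L))
           \<union> (\<Union>q\<in>rung_hits F L S. column_gap L (fst q) (snd q))"
    (is "S \<subseteq> ?rungs \<union> ?boundary_gaps \<union> ?hit_gaps")
proof
  fix x assume "x \<in> S"
  obtain c h where x: "x = (c, h)" by (cases x)
  have "c < F" "h \<le> L * F" using \<open>x \<in> S\<close> S x by (auto simp: ladder_verts_def)
  define g where "g = h div L"
  have hg: "g * L + h mod L = h" by (simp add: g_def)
  show "x \<in> ?rungs \<union> ?boundary_gaps \<union> ?hit_gaps"
  proof (cases "h mod L = 0")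
    case True
    then have "g * L \<le> F * L" using \<open>h \<le> L * F\<close> hg by (simp add: mult.commute[of L F])
    then have "g \<le> F" using \<open>L \<ge> 1\<close> by simp
    then have "(c, g) \<in> rung_hits F L S" using \<open>x \<in> S\<close> x \<open>c < F\<close> hg True by (simp add: rung_hits_def)
    moreover have "x = (\<lambda>(c, k). (c, k * L)) (c, g)" using x hg True by simp
    ultimately show ?thesis by blast
  next
    case False
    have "h mod L < L" using \<open>L \<ge> 1\<close> by simp
    then have x_gap: "x \<in> column_gap L c g"
      unfolding column_gap_def using x hg False by (intro image_eqI[of _ _ "h mod L"]) auto
    show ?thesis
    proof (cases "\<exists>h0. g * L \<le> h0 \<and> h0 < g * L + L \<and> (c, h0) \<in> vertical_boundary F L S")
      case True
      then obtain h0 where h0: "g * L \<le> h0" "h0 < g * L + L" "(c, h0) \<in> vertical_boundary F L S"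
        by blast
      have "h0 div L = g" using h0(1,2) by (intro div_nat_eqI) (auto simp: algebra_simps)
      then show ?thesis using x_gap h0(3) by (intro UnI1 UnI2 UN_I[of "(c, h0)"]) simp_all
    next
      case no_boundary: False
      have "(c, g * L) \<in> S"
      proof (rule ccontr)
        assume "(c, g * L) \<notin> S"
        moreover have "g * L \<le> h" using hg by linarith
        ultimately obtain y where y: "g * L \<le> y" "y < h" "((c, y) \<in> S) \<noteq> ((c, Suc y) \<in> S)"
          using nat_pred_changes_between[of "g * L" h "\<lambda>y. (c, y) \<in> S"] \<open>x \<in> S\<close> x by auto
        then have "(c, y) \<in> vertical_boundary F L S"
          using \<open>c < F\<close> \<open>h \<le> L * F\<close> by (simp add: vertical_boundary_def)
        moreover have "y < g * L + L" using y(2) hg \<open>h mod L < L\<close> by linarith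
        ultimately show False using no_boundary y(1) by blast
      qed
      moreover have "g < F"
      proof -
        have "g * L < F * L"
          using \<open>h \<le> L * F\<close> hg False mult.commute[of L F] by linarith
        then show ?thesis by simp
      qed
      ultimately have "(c, g) \<in> rung_hits F L S" using \<open>c < F\<close> by (simp add: rung_hits_def)
      then show ?thesis using x_gap by (intro UnI2 UN_I[of "(c, g)"]) simp_all
    qed
  qed
qed

lemma card_UN_column_gaps_le:
  "finite A \<Longrightarrow> card (\<Union>p\<in>A. column_gap L (c p) (g p)) \<le> card A * (L - 1)"
  using card_UN_le[of A "\<lambda>p. column_gap L (c p) (g p)"]
    sum_mono[of A "\<lambda>p. card (column_gap L (c p) (g p))" "\<lambda>_. L - 1"] card_column_gap_le
  by simp

lemma card_le_rung_hits_gaps: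
  assumes "L \<ge> 1" and "S \<subseteq> ladder_verts F L"
  shows "card S \<le> card (rung_hits F L S) * L + card (vertical_boundary F L S) * (L - 1)"
proof -
  let ?R = "rung_hits F L S" and ?V = "vertical_boundary F L S"
  let ?rungs = "(\<lambda>(c, k). (c, k * L)) ` ?R"
    and ?boundary_gaps = "\<Union>p\<in>?V. column_gap L (fst p) (snd p div L)"
    and ?hit_gaps = "\<Union>q\<in>?R. column_gap L (fst q) (snd q)"
  have "finite ?rungs" "finite ?boundary_gaps" "finite ?hit_gaps"
    by (simp_all add: finite_rung_hits finite_vertical_boundary column_gap_def)
  then have "card S \<le> card (?rungs \<union> ?boundary_gaps \<union> ?hit_gaps)"
    by (intro card_mono ladder_set_cover[OF assms]) auto
  also have "\<dots> \<le> card ?rungs + card ?boundary_gaps + card ?hit_gaps"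
    by (rule order_trans[OF card_Un_le]) (simp add: card_Un_le)
  also have "\<dots> \<le> card ?R + card ?V * (L - 1) + card ?R * (L - 1)"
    by (intro add_mono card_image_le card_UN_column_gaps_le finite_rung_hits finite_vertical_boundary)
  also have "\<dots> = card ?R * L + card ?V * (L - 1)"
    using \<open>L \<ge> 1\<close> by (cases L) (simp_all add: algebra_simps)
  finally show ?thesis .
qed

lemma four_mult_le_square_add: "4 * a * b \<le> ((a::nat) + b)\<^sup>2"
proof -
  have "0 \<le> (int a - int b)\<^sup>2" by simp
  then have "int (4 * a * b) \<le> int ((a + b)\<^sup>2)" by (simp add: power2_eq_square algebra_simps)
  then show ?thesis by (simp only: of_nat_le_iff)
qed

text \<open>The isoperimetric inequality: a set with fewer than \<open>F\<close> boundary edges and no full column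
  meets at most \<open>V\<close> columns and \<open>H\<close> rung levels, where \<open>V + H < F\<close> count its boundary edges, so it
  has at most about \<open>L V H \<le> L F\<^sup>2 / 4\<close> points.\<close>

lemma card_small_boundary_set_le:
  assumes "L \<ge> 1" and S: "S \<subseteq> ladder_verts F L"
    and boundary: "card (edge_boundary (ladder_edges F L) S) < F"
    and no_full_column: "\<forall>c<F. \<exists>h\<le>L * F. (c, h) \<notin> S"
  shows "4 * card S \<le> L * F\<^sup>2"
proof -
  define V where "V = card (vertical_boundary F L S)"
  define H where "H = card (rung_boundary F L S)"
  have VH: "V + H < F"
    using card_vertical_rung_boundary_le[OF \<open>L \<ge> 1\<close>, of F S] boundary unfolding V_def H_def by simp
  define cols where "cols = {c. c < F \<and> (\<exists>h. (c, h) \<in> S)}"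
  define levels where "levels = {k. k \<le> F \<and> (\<exists>c. (c, k * L) \<in> S)}"
  have cols: "card cols \<le> V"
    unfolding cols_def V_def by (rule card_columns_meeting_le[OF S no_full_column])
  have "\<forall>k\<le>F. \<exists>c<F. (c, k * L) \<notin> S"
  proof (rule ccontr)
    assume "\<not> ?thesis"
    then have "{..<F} \<subseteq> cols" by (auto simp: cols_def)
    moreover have "finite cols" by (simp add: cols_def)
    ultimately have "card {..<F} \<le> card cols" by (rule card_mono[rotated])
    then show False using cols VH by simp
  qed
  then have levels: "card levels \<le> H"
    unfolding levels_def H_def by (rule card_rung_levels_meeting_le[OF S])
  have "rung_hits F L S \<subseteq> cols \<times> levels" by (auto simp: rung_hits_def cols_def levels_def)
  moreover have "finite (cols \<times> levels)" by (simp add: cols_def levels_def)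
  ultimately have "card (rung_hits F L S) \<le> card cols * card levels"
    by (metis card_cartesian_product card_mono)
  also have "\<dots> \<le> V * H" using cols levels by (rule mult_le_mono)
  finally have "card S \<le> V * H * L + V * (L - 1)"
    using card_le_rung_hits_gaps[OF \<open>L \<ge> 1\<close> S] unfolding V_def
    by (meson add_le_mono1 le_trans mult_le_mono1)
  also have "\<dots> \<le> L * (V * (H + 1))" by (simp add: algebra_simps)
  finally have "4 * card S \<le> 4 * (L * (V * (H + 1)))" by simp
  also have "\<dots> = L * (4 * V * (H + 1))" by (simp add: algebra_simps)
  also have "\<dots> \<le> L * (V + (H + 1))\<^sup>2" using four_mult_le_square_add[of V "H + 1"] by simp
  also have "\<dots> \<le> L * F\<^sup>2" using VH by (intro mult_le_mono2 power_mono) auto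
  finally show ?thesis .
qed


section \<open>Bridges of a symmetric relation\<close>

definition del_edge :: "('v \<times> 'v) set \<Rightarrow> 'v \<Rightarrow> 'v \<Rightarrow> ('v \<times> 'v) set" where
  "del_edge R t u = {(x, y) \<in> R. {x, y} \<noteq> {t, u}}"

text \<open>The vertices reachable from \<open>u\<close> without crossing the edge \<open>{t, u}\<close>; if that edge is a
  bridge, this is the component of \<open>u\<close> after deleting it.\<close>

definition bridge_side :: "('v \<times> 'v) set \<Rightarrow> 'v \<Rightarrow> 'v \<Rightarrow> 'v set" where
  "bridge_side R t u = {w. (u, w) \<in> (del_edge R t u)\<^sup>*}"

lemma del_edge_commute: "del_edge R u t = del_edge R t u"
  by (simp add: del_edge_def insert_commute)

lemma sym_del_edge: "sym R \<Longrightarrow> sym (del_edge R t u)"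
  by (auto simp: sym_def del_edge_def insert_commute)

lemma rtrancl_sym_swap: "sym R \<Longrightarrow> (a, b) \<in> R\<^sup>* \<Longrightarrow> (b, a) \<in> R\<^sup>*"
  by (meson sym_rtrancl symD)

lemma rtrancl_stays_in:
  assumes "(a, b) \<in> R\<^sup>*" and "a \<in> D" and "\<And>x y. (x, y) \<in> R \<Longrightarrow> x \<in> D \<Longrightarrow> y \<in> D"
  shows "b \<in> D"
  using assms(1,2) by (induction rule: rtrancl_induct) (use assms(3) in blast)+

lemma bridge_side_step:
  "x \<in> bridge_side R t u \<Longrightarrow> (x, y) \<in> R \<Longrightarrow> {x, y} \<noteq> {t, u} \<Longrightarrow> y \<in> bridge_side R t u"
  unfolding bridge_side_def del_edge_def by (auto intro: rtrancl_into_rtrancl)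

lemma bridge_side_subset:
  assumes "R \<subseteq> W \<times> W" and "u \<in> W"
  shows "bridge_side R t u \<subseteq> W"
proof
  fix x assume "x \<in> bridge_side R t u"
  then have "(u, x) \<in> (del_edge R t u)\<^sup>*" by (simp add: bridge_side_def)
  then show "x \<in> W"
    by (rule rtrancl_stays_in) (use assms in \<open>auto simp: del_edge_def\<close>)
qed

lemma bridge_sides_disjoint:
  assumes "sym R" and bridge: "t \<notin> bridge_side R t u"
  shows "bridge_side R t u \<inter> bridge_side R u t = {}"
proof (rule ccontr)
  assume "bridge_side R t u \<inter> bridge_side R u t \<noteq> {}"
  then obtain x where "(u, x) \<in> (del_edge R t u)\<^sup>*" "(t, x) \<in> (del_edge R t u)\<^sup>*"
    by (auto simp: bridge_side_def del_edge_commute)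
  then have "(u, t) \<in> (del_edge R t u)\<^sup>*"
    using rtrancl_sym_swap[OF sym_del_edge[OF \<open>sym R\<close>]] by (meson rtrancl_trans)
  then show False using bridge by (simp add: bridge_side_def)
qed

lemma rtrancl_in_bridge_sides:
  assumes "sym R" and bridges: "\<And>t u. (t, u) \<in> R \<Longrightarrow> t \<notin> bridge_side R t u"
    and "(t, x) \<in> R\<^sup>*"
  shows "x = t \<or> (\<exists>u. (t, u) \<in> R \<and> x \<in> bridge_side R t u)"
  using \<open>(t, x) \<in> R\<^sup>*\<close>
proof (induction rule: rtrancl_induct)
  case (step y z)
  show ?case
  proof (cases "y = t")
    case True
    then show ?thesis using step.hyps(2) by (auto simp: bridge_side_def)
  next
    case False
    with step.IH obtain u where u: "(t, u) \<in> R" "y \<in> bridge_side R t u" by blast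
    have "{y, z} \<noteq> {t, u} \<or> z = t"
      using False u bridges by (auto simp: doubleton_eq_iff)
    then show ?thesis using bridge_side_step[OF u(2) step.hyps(2)] u(1) by blast
  qed
qed simp

lemma bridge_side_shrinks:
  assumes bridges: "\<And>t u. (t, u) \<in> R \<Longrightarrow> t \<notin> bridge_side R t u" and irrefl: "(u, u) \<notin> R"
    and "(u, w) \<in> R" "w \<noteq> t"
  shows "bridge_side R u w \<subset> bridge_side R t u"
proof -
  have "bridge_side R u w \<subseteq> bridge_side R t u"
  proof
    fix x assume "x \<in> bridge_side R u w"
    then have "(w, x) \<in> (del_edge R u w)\<^sup>*" by (simp add: bridge_side_def)
    then have "(w, x) \<in> (del_edge R t u)\<^sup>*"
    proof (induction rule: rtrancl_induct)
      case (step y z)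
      then have "y \<in> bridge_side R u w" "z \<in> bridge_side R u w"
        by (auto simp: bridge_side_def intro: rtrancl_into_rtrancl)
      then have "{y, z} \<noteq> {t, u}" using bridges[OF \<open>(u, w) \<in> R\<close>] by auto
      then show ?case using step by (auto simp: del_edge_def intro: rtrancl_into_rtrancl)
    qed simp
    moreover have "(u, w) \<in> del_edge R t u"
      using \<open>(u, w) \<in> R\<close> \<open>w \<noteq> t\<close> irrefl by (auto simp: del_edge_def doubleton_eq_iff)
    ultimately show "x \<in> bridge_side R t u"
      by (simp add: bridge_side_def converse_rtrancl_into_rtrancl)
  qed
  moreover have "u \<in> bridge_side R t u" "u \<notin> bridge_side R u w"
    using bridges[OF \<open>(u, w) \<in> R\<close>] by (simp_all add: bridge_side_def)
  ultimately show ?thesis by blast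
qed

text \<open>If every edge is a bridge and \<open>big\<close> never holds in both directions of an edge, some vertex
  has no big outgoing edge: take a big oriented edge \<open>(t, u)\<close> with smallest side; any big
  \<open>(u, w)\<close> would have a strictly smaller side.\<close>

lemma exists_vertex_without_big_edge:
  assumes "sym R" and irrefl: "\<And>x. (x, x) \<notin> R"
    and "R \<subseteq> W \<times> W" and "finite W" and "w0 \<in> W"
    and bridges: "\<And>t u. (t, u) \<in> R \<Longrightarrow> t \<notin> bridge_side R t u"
    and not_both: "\<And>t u. (t, u) \<in> R \<Longrightarrow> \<not> (big t u \<and> big u t)"
  shows "\<exists>u\<in>W. \<forall>w. (u, w) \<in> R \<longrightarrow> \<not> big u w"
proof (cases "\<exists>t u. (t, u) \<in> R \<and> big t u")
  case False
  then show ?thesis using \<open>w0 \<in> W\<close> by blast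
next
  case True
  then obtain tu where tu: "tu \<in> R" "big (fst tu) (snd tu)"
    and least: "\<And>tu'. tu' \<in> R \<Longrightarrow> big (fst tu') (snd tu') \<Longrightarrow>
       card (bridge_side R (fst tu) (snd tu)) \<le> card (bridge_side R (fst tu') (snd tu'))"
    using ex_has_least_nat[of "\<lambda>tu. tu \<in> R \<and> big (fst tu) (snd tu)"
        _ "\<lambda>tu. card (bridge_side R (fst tu) (snd tu))"] by force
  obtain t u where tu_eq: "tu = (t, u)" by (cases tu)
  have "u \<in> W" using tu(1) tu_eq \<open>R \<subseteq> W \<times> W\<close> by auto
  have "\<not> big u w" if uw: "(u, w) \<in> R" for w
  proof
    assume "big u w"
    then have "w \<noteq> t" using not_both tu tu_eq by auto
    have "finite (bridge_side R t u)"
      using bridge_side_subset[OF \<open>R \<subseteq> W \<times> W\<close> \<open>u \<in> W\<close>] \<open>finite W\<close> by (rule finite_subset)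
    then have "card (bridge_side R u w) < card (bridge_side R t u)"
      using bridge_side_shrinks[OF bridges irrefl uw \<open>w \<noteq> t\<close>] by (rule psubset_card_mono)
    then show False using least[of "(u, w)"] uw \<open>big u w\<close> tu_eq by simp
  qed
  then show ?thesis using \<open>u \<in> W\<close> by blast
qed


section \<open>Cycles in the target ladders\<close>

definition ygap :: "nat \<Rightarrow> nat" where
  "ygap m = 2 ^ 2 ^ (2 * m + 1)"

lemma ygap_pos: "0 < ygap m"
  by (simp add: ygap_def)

lemma ygap_mono: "m \<le> m' \<Longrightarrow> ygap m \<le> ygap m'"
  unfolding ygap_def by (intro power_increasing) auto

lemma Yn_eq: "Yn f m = (ladder_verts (f m) (ygap m), ladder_edges (f m) (ygap m))"
  by (simp add: Yn_def ladder_eq ygap_def)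

lemma Yg_verts_iff: "(m, c, h) \<in> verts (Yg f) \<longleftrightarrow> 1 \<le> m \<and> c < f m \<and> h \<le> ygap m * f m"
  by (auto simp: Yg_def dunion_def verts_def Yn_eq ladder_verts_def)

lemma Yg_edges_iff:
  "e \<in> edges (Yg f) \<longleftrightarrow>
     (\<exists>m e0. 1 \<le> m \<and> e0 \<in> ladder_edges (f m) (ygap m) \<and> e = (\<lambda>v. (m, v)) ` e0)"
  by (auto simp: Yg_def dunion_def edges_def Yn_eq)

lemma Yg_edge_cases:
  assumes "{(m, c, h), (m', c', h')} \<in> edges (Yg f)"
  shows "m' = m \<and>
    ((c' = c \<and> (h' = Suc h \<or> h = Suc h')) \<or> (h' = h \<and> ygap m dvd h \<and> (c' = Suc c \<or> c = Suc c')))"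
proof -
  obtain m0 e0 where "e0 \<in> ladder_edges (f m0) (ygap m0)"
    and e: "{(m, c, h), (m', c', h')} = (\<lambda>v. (m0, v)) ` e0"
    using assms unfolding Yg_edges_iff by blast
  then consider i j where "e0 = {(i, j), (i, Suc j)}"
    | i j where "e0 = {(i, j), (Suc i, j)}" "ygap m0 dvd j"
    unfolding ladder_edges_def by auto
  then show ?thesis
  proof cases
    case (1 i j)
    then have "{(m, c, h), (m', c', h')} = {(m0, i, j), (m0, i, Suc j)}" using e by simp
    then show ?thesis by (auto simp: doubleton_eq_iff)
  next
    case (2 i j)
    then have "{(m, c, h), (m', c', h')} = {(m0, i, j), (m0, Suc i, j)}" using e by simp
    then show ?thesis using 2(2) by (auto simp: doubleton_eq_iff)
  qed
qed

definition induced_rel :: "'v graph \<Rightarrow> 'v set \<Rightarrow> ('v \<times> 'v) set" where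
  "induced_rel G W = {(x, y). x \<in> W \<and> y \<in> W \<and> {x, y} \<in> edges G}"

lemma sym_induced_rel: "sym (induced_rel G W)"
  by (auto simp: sym_def induced_rel_def insert_commute)

lemma irrefl_induced_Yg: "(x, x) \<notin> induced_rel (Yg f) W"
proof
  obtain m c h where "x = (m, c, h)" by (cases x)
  moreover assume "(x, x) \<in> induced_rel (Yg f) W"
  ultimately show False
    using Yg_edge_cases[of m c h m c h f] by (simp add: induced_rel_def)
qed

lemma del_edge_induced_Yg_step:
  assumes "(x, y) \<in> del_edge (induced_rel (Yg f) W) a b" and "x = (m, c, h)"
  obtains c' h' where "y = (m, c', h')" "x \<in> W" "y \<in> W" "{x, y} \<noteq> {a, b}"
    "(c' = c \<and> (h' = Suc h \<or> h = Suc h')) \<or> (h' = h \<and> ygap m dvd h \<and> (c' = Suc c \<or> c = Suc c'))"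
  using assms Yg_edge_cases[of m c h "fst y" "fst (snd y)" "snd (snd y)" f]
  by (cases y) (auto simp: del_edge_def induced_rel_def)

lemma multiple_add_le:
  assumes "(M::nat) dvd h" "M dvd r" "h < r"
  shows "h + M \<le> r"
proof -
  obtain k q where "h = k * M" "r = q * M"
    using assms(1,2) by (metis dvd_def mult.commute)
  moreover have "k < q" using assms(3) calculation by simp
  then have "Suc k * M \<le> q * M" by (intro mult_le_mono1) simp
  ultimately show ?thesis by simp
qed

lemma multiple_le_round_down:
  assumes "(M::nat) dvd h" "h \<le> j"
  shows "h \<le> j div M * M"
proof -
  have "h div M * M \<le> j div M * M" using assms(2) by (intro mult_le_mono1 div_le_mono)
  then show ?thesis using assms(1) by simp
qed

lemma round_down_add_le_multiple:
  assumes "(M::nat) dvd h" "j < h"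
  shows "j div M * M + M \<le> h"
proof (rule multiple_add_le)
  have "j div M * M \<le> j" by (simp add: div_times_less_eq_dividend)
  then show "j div M * M < h" using assms(2) by linarith
qed (use assms(1) in simp_all)

lemma card_column_window_ge:
  assumes "finite W"
    and window: "\<forall>h. lo \<le> h \<longrightarrow> h \<le> lo + M \<longrightarrow> (\<exists>c. P c \<and> (m, c, h) \<in> W)"
  shows "M + 1 \<le> card {x \<in> W. P (fst (snd x))}"
proof -
  from window have "\<forall>h. \<exists>c. lo \<le> h \<and> h \<le> lo + M \<longrightarrow> P c \<and> (m, c, h) \<in> W" by blast
  then obtain col where col: "\<And>h. lo \<le> h \<Longrightarrow> h \<le> lo + M \<Longrightarrow> P (col h) \<and> (m, col h, h) \<in> W"
    by (metis choice)
  have "inj_on (\<lambda>h. (m, col h, h)) {lo..lo + M}" by (auto simp: inj_on_def)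
  moreover have "(\<lambda>h. (m, col h, h)) ` {lo..lo + M} \<subseteq> {x \<in> W. P (fst (snd x))}"
    using col by auto
  ultimately have "card {lo..lo + M} \<le> card {x \<in> W. P (fst (snd x))}"
    using \<open>finite W\<close> by (intro card_inj_on_le) auto
  then show ?thesis by simp
qed

lemma card_ge_two_column_windows:
  assumes "finite W" and disjoint: "\<And>c. \<not> (P c \<and> Q c)"
    and "\<forall>h. lo1 \<le> h \<longrightarrow> h \<le> lo1 + M \<longrightarrow> (\<exists>c. P c \<and> (m, c, h) \<in> W)"
    and "\<forall>h. lo2 \<le> h \<longrightarrow> h \<le> lo2 + M \<longrightarrow> (\<exists>c. Q c \<and> (m, c, h) \<in> W)"
  shows "2 * M + 2 \<le> card W"
proof -
  have "card {x \<in> W. P (fst (snd x))} + card {x \<in> W. Q (fst (snd x))}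
      = card ({x \<in> W. P (fst (snd x))} \<union> {x \<in> W. Q (fst (snd x))})"
    using \<open>finite W\<close> disjoint by (intro card_Un_disjoint[symmetric]) auto
  also have "\<dots> \<le> card W" using \<open>finite W\<close> by (intro card_mono) auto
  finally show ?thesis
    using card_column_window_ge[OF \<open>finite W\<close> assms(3)] card_column_window_ge[OF \<open>finite W\<close> assms(4)]
    by simp
qed

text \<open>A walk from \<open>(m, c, j)\<close> to \<open>(m, c, j + 1)\<close> avoiding the vertical edge between them has to
  leave column \<open>c\<close> through rungs at the rung heights \<open>r \<le> j < r + M\<close> enclosing \<open>j\<close>; so \<open>W\<close>
  contains the whole column segment between these rungs and, on both sides of \<open>j\<close>, a segment of
  some other column.\<close>

locale vertical_cycle =
  fixes f :: "nat \<Rightarrow> nat" and W :: "(nat \<times> nat \<times> nat) set" and m c j :: nat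
  assumes finite_W: "finite W"
    and lower_in: "(m, c, j) \<in> W" and upper_in: "(m, c, Suc j) \<in> W"
    and walk: "((m, c, j), (m, c, Suc j))
                 \<in> (del_edge (induced_rel (Yg f) W) (m, c, j) (m, c, Suc j))\<^sup>*"
begin

abbreviation "M \<equiv> ygap m"
abbreviation "r \<equiv> j div M * M"
abbreviation "A \<equiv> del_edge (induced_rel (Yg f) W) (m, c, j) (m, c, Suc j)"

lemma walk_back: "((m, c, Suc j), (m, c, j)) \<in> A\<^sup>*"
  using rtrancl_sym_swap[OF sym_del_edge[OF sym_induced_rel] walk] .

lemma r_le: "r \<le> j"
  by (simp add: div_times_less_eq_dividend)

lemma less_r_add: "j < r + M"
  using mod_less_divisor[OF ygap_pos[of m], of j] div_mult_mod_eq[of j M] by linarith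

lemma no_rung_between: "r < h \<Longrightarrow> h < r + M \<Longrightarrow> \<not> M dvd h"
  using multiple_add_le[of M r h] by auto

lemma column_filled_below:
  assumes "r \<le> h0" "h0 \<le> j"
  shows "(m, c, h0) \<in> W"
proof (rule ccontr)
  assume missing: "(m, c, h0) \<notin> W"
  define D where "D = {(m, c, h) | h. h0 < h \<and> h \<le> j}"
  have "h0 \<noteq> j" using missing lower_in by auto
  have "(m, c, Suc j) \<in> D"
  proof (rule rtrancl_stays_in[OF walk])
    show "(m, c, j) \<in> D" unfolding D_def using assms(2) \<open>h0 \<noteq> j\<close> by simp
  next
    fix x y assume "(x, y) \<in> A" "x \<in> D"
    then obtain h where x: "x = (m, c, h)" "h0 < h" "h \<le> j" unfolding D_def by blast
    obtain c' h' where y: "y = (m, c', h')" "x \<in> W" "y \<in> W" "{x, y} \<noteq> {(m, c, j), (m, c, Suc j)}"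
      and step: "(c' = c \<and> (h' = Suc h \<or> h = Suc h')) \<or> (h' = h \<and> M dvd h \<and> (c' = Suc c \<or> c = Suc c'))"
      using del_edge_induced_Yg_step[OF \<open>(x, y) \<in> A\<close> x(1)] by blast
    have "\<not> M dvd h" using no_rung_between[of h] x(2,3) assms(1) less_r_add by simp
    with step consider "c' = c" "h' = Suc h" | "c' = c" "h = Suc h'" by blast
    then have "c' = c \<and> h0 < h' \<and> h' \<le> j"
    proof cases
      case 1
      then have "h \<noteq> j" using y(1,4) x(1) by auto
      then show ?thesis using 1 x(2,3) by simp
    next
      case 2
      then have "h' \<noteq> h0" using y(1,3) missing by auto
      then show ?thesis using 2 x(2,3) by simp
    qed
    then show "y \<in> D" unfolding D_def y(1) by blast
  qed
  then show False unfolding D_def by simp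
qed

lemma column_filled_above:
  assumes "Suc j \<le> h0" "h0 \<le> r + M"
  shows "(m, c, h0) \<in> W"
proof (rule ccontr)
  assume missing: "(m, c, h0) \<notin> W"
  define D where "D = {(m, c, h) | h. Suc j \<le> h \<and> h < h0}"
  have "h0 \<noteq> Suc j" using missing upper_in by auto
  have "(m, c, j) \<in> D"
  proof (rule rtrancl_stays_in[OF walk_back])
    show "(m, c, Suc j) \<in> D" unfolding D_def using assms(1) \<open>h0 \<noteq> Suc j\<close> by simp
  next
    fix x y assume "(x, y) \<in> A" "x \<in> D"
    then obtain h where x: "x = (m, c, h)" "Suc j \<le> h" "h < h0" unfolding D_def by blast
    obtain c' h' where y: "y = (m, c', h')" "x \<in> W" "y \<in> W" "{x, y} \<noteq> {(m, c, j), (m, c, Suc j)}"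
      and step: "(c' = c \<and> (h' = Suc h \<or> h = Suc h')) \<or> (h' = h \<and> M dvd h \<and> (c' = Suc c \<or> c = Suc c'))"
      using del_edge_induced_Yg_step[OF \<open>(x, y) \<in> A\<close> x(1)] by blast
    have "\<not> M dvd h" using no_rung_between[of h] x(2,3) assms(2) r_le by simp
    with step consider "c' = c" "h' = Suc h" | "c' = c" "h = Suc h'" by blast
    then have "c' = c \<and> Suc j \<le> h' \<and> h' < h0"
    proof cases
      case 1
      then have "h' \<noteq> h0" using y(1,3) missing by auto
      then show ?thesis using 1 x(2,3) by simp
    next
      case 2
      then have "h \<noteq> Suc j" using y(1,4) x(1) by (auto simp: insert_commute)
      then show ?thesis using 2 x(2,3) by simp
    qed
    then show "y \<in> D" unfolding D_def y(1) by blast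
  qed
  then show False unfolding D_def by simp
qed

lemma other_column_below: "\<exists>c1. c1 \<noteq> c \<and> (\<forall>h. r \<le> h \<longrightarrow> h \<le> j \<longrightarrow> (m, c1, h) \<in> W)"
proof (rule ccontr)
  assume "\<not> ?thesis"
  then have "\<forall>c1. \<exists>h. c1 \<noteq> c \<longrightarrow> r \<le> h \<and> h \<le> j \<and> (m, c1, h) \<notin> W" by blast
  then obtain hole where hole: "\<And>c1. c1 \<noteq> c \<Longrightarrow> r \<le> hole c1 \<and> hole c1 \<le> j \<and> (m, c1, hole c1) \<notin> W"
    by (metis choice)
  define D where "D = {(m, c', h) | c' h. h \<le> j \<and> (c' \<noteq> c \<longrightarrow> h \<le> hole c')}"
  have "(m, c, Suc j) \<in> D"
  proof (rule rtrancl_stays_in[OF walk])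
    show "(m, c, j) \<in> D" unfolding D_def by blast
  next
    fix x y assume "(x, y) \<in> A" "x \<in> D"
    then obtain c0 h where x: "x = (m, c0, h)" "h \<le> j" "c0 \<noteq> c \<longrightarrow> h \<le> hole c0"
      unfolding D_def by blast
    obtain c' h' where y: "y = (m, c', h')" "x \<in> W" "y \<in> W" "{x, y} \<noteq> {(m, c, j), (m, c, Suc j)}"
      and step: "(c' = c0 \<and> (h' = Suc h \<or> h = Suc h')) \<or> (h' = h \<and> M dvd h \<and> (c' = Suc c0 \<or> c0 = Suc c'))"
      using del_edge_induced_Yg_step[OF \<open>(x, y) \<in> A\<close> x(1)] by blast
    from step consider "c' = c0" "h' = Suc h" | "c' = c0" "h = Suc h'" | "h' = h" "M dvd h"
      by blast
    then have "h' \<le> j \<and> (c' \<noteq> c \<longrightarrow> h' \<le> hole c')"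
    proof cases
      case 1
      have "h \<noteq> j" if "c0 = c" using y(1,4) x(1) 1 that by auto
      moreover have "h \<noteq> hole c0" if "c0 \<noteq> c" using hole[OF that] y(2) x(1) by auto
      ultimately show ?thesis using 1 x(2,3) hole[of c0] by (cases "c0 = c") auto
    next
      case 2
      then show ?thesis using x(2,3) by auto
    next
      case 3
      then show ?thesis using multiple_le_round_down[of M h j] x(2) hole[of c'] by auto
    qed
    then show "y \<in> D" unfolding D_def y(1) by blast
  qed
  then show False unfolding D_def by simp
qed

lemma other_column_above:
  "\<exists>c2. c2 \<noteq> c \<and> (\<forall>h. Suc j \<le> h \<longrightarrow> h \<le> r + M \<longrightarrow> (m, c2, h) \<in> W)"
proof (rule ccontr)
  assume "\<not> ?thesis"
  then have "\<forall>c1. \<exists>h. c1 \<noteq> c \<longrightarrow> Suc j \<le> h \<and> h \<le> r + M \<and> (m, c1, h) \<notin> W" by blast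
  from choice[OF this] obtain hole
    where hole: "\<And>c1. c1 \<noteq> c \<Longrightarrow> Suc j \<le> hole c1 \<and> hole c1 \<le> r + M \<and> (m, c1, hole c1) \<notin> W"
    by blast
  define D where "D = {(m, c', h) | c' h. Suc j \<le> h \<and> (c' \<noteq> c \<longrightarrow> hole c' \<le> h)}"
  have "(m, c, j) \<in> D"
  proof (rule rtrancl_stays_in[OF walk_back])
    show "(m, c, Suc j) \<in> D" unfolding D_def by blast
  next
    fix x y assume "(x, y) \<in> A" "x \<in> D"
    then obtain c0 h where x: "x = (m, c0, h)" "Suc j \<le> h" "c0 \<noteq> c \<longrightarrow> hole c0 \<le> h"
      unfolding D_def by blast
    obtain c' h' where y: "y = (m, c', h')" "x \<in> W" "y \<in> W" "{x, y} \<noteq> {(m, c, j), (m, c, Suc j)}"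
      and step: "(c' = c0 \<and> (h' = Suc h \<or> h = Suc h')) \<or> (h' = h \<and> M dvd h \<and> (c' = Suc c0 \<or> c0 = Suc c'))"
      using del_edge_induced_Yg_step[OF \<open>(x, y) \<in> A\<close> x(1)] by blast
    from step consider "c' = c0" "h' = Suc h" | "c' = c0" "h = Suc h'" | "h' = h" "M dvd h"
      by blast
    then have "Suc j \<le> h' \<and> (c' \<noteq> c \<longrightarrow> hole c' \<le> h')"
    proof cases
      case 1
      then show ?thesis using x(2,3) by auto
    next
      case 2
      have "h \<noteq> Suc j" if "c0 = c" using y(1,4) x(1) 2 that by (auto simp: insert_commute)
      moreover have "h \<noteq> hole c0" if "c0 \<noteq> c" using hole[OF that] y(2) x(1) by auto
      ultimately show ?thesis using 2 x(2,3) hole[of c0] by (cases "c0 = c") auto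
    next
      case 3
      then show ?thesis using round_down_add_le_multiple[of M h j] x(2) hole[of c'] by auto
    qed
    then show "y \<in> D" unfolding D_def y(1) by blast
  qed
  then show False unfolding D_def by simp
qed

lemma card_ge: "2 * M + 2 \<le> card W"
proof (rule card_ge_two_column_windows[OF finite_W, of "\<lambda>c'. c' = c" "\<lambda>c'. c' \<noteq> c"])
  show "\<forall>h. r \<le> h \<longrightarrow> h \<le> r + M \<longrightarrow> (\<exists>c'. c' = c \<and> (m, c', h) \<in> W)"
    using column_filled_below column_filled_above not_less_eq_eq by blast
  obtain c1 c2 where "c1 \<noteq> c" "\<forall>h. r \<le> h \<longrightarrow> h \<le> j \<longrightarrow> (m, c1, h) \<in> W"
    and "c2 \<noteq> c" "\<forall>h. Suc j \<le> h \<longrightarrow> h \<le> r + M \<longrightarrow> (m, c2, h) \<in> W"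
    using other_column_below other_column_above by blast
  then show "\<forall>h. r \<le> h \<longrightarrow> h \<le> r + M \<longrightarrow> (\<exists>c'. c' \<noteq> c \<and> (m, c', h) \<in> W)"
    using not_less_eq_eq by blast
qed simp

end

text \<open>A walk from \<open>(m, c, r)\<close> to \<open>(m, c + 1, r)\<close> avoiding the rung between them must change
  sides (columns \<open>\<le> c\<close> versus \<open>> c\<close>) through another rung. If the columns of one side missed
  a height in \<open>(r, r + M]\<close> and one in \<open>[r - M, r)\<close>, the walk would be trapped between these
  heights on that side, where the only rung is at height \<open>r\<close>. So each side occupies \<open>M + 1\<close>
  consecutive heights.\<close>

locale rung_cycle =
  fixes f :: "nat \<Rightarrow> nat" and W :: "(nat \<times> nat \<times> nat) set" and m c r :: nat
  assumes finite_W: "finite W"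
    and left_in: "(m, c, r) \<in> W" and right_in: "(m, Suc c, r) \<in> W"
    and rung_height: "ygap m dvd r"
    and walk: "((m, c, r), (m, Suc c, r))
                 \<in> (del_edge (induced_rel (Yg f) W) (m, c, r) (m, Suc c, r))\<^sup>*"
begin

abbreviation "M \<equiv> ygap m"
abbreviation "A \<equiv> del_edge (induced_rel (Yg f) W) (m, c, r) (m, Suc c, r)"

definition occupied :: "(nat \<Rightarrow> bool) \<Rightarrow> nat \<Rightarrow> bool" where
  "occupied Q h \<longleftrightarrow> (\<exists>c'. Q c' \<and> (m, c', h) \<in> W)"

definition region :: "(nat \<Rightarrow> bool) \<Rightarrow> nat \<Rightarrow> (nat \<times> nat \<times> nat) set" where
  "region Q h1 = {(m, c', h) | c' h. Q c' \<and> h < h1 \<and> (\<forall>h2. h \<le> h2 \<longrightarrow> h2 \<le> r \<longrightarrow> occupied Q h2)}"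

lemma region_closed:
  assumes side: "\<And>c0 c'. Q c0 \<Longrightarrow> \<not> Q c' \<Longrightarrow> c' = Suc c0 \<or> c0 = Suc c' \<Longrightarrow> {c0, c'} = {c, Suc c}"
    and h1: "h1 \<le> r + M" "\<not> occupied Q h1"
    and gap_below: "M \<le> r \<Longrightarrow> \<exists>h2. r - M \<le> h2 \<and> h2 \<le> r \<and> \<not> occupied Q h2"
    and "(x, y) \<in> A" "x \<in> region Q h1"
  shows "y \<in> region Q h1"
proof -
  obtain c0 h where x: "x = (m, c0, h)" "Q c0" "h < h1"
    and occ: "\<forall>h2. h \<le> h2 \<longrightarrow> h2 \<le> r \<longrightarrow> occupied Q h2"
    using \<open>x \<in> region Q h1\<close> unfolding region_def by blast
  obtain c' h' where y: "y = (m, c', h')" "x \<in> W" "y \<in> W" "{x, y} \<noteq> {(m, c, r), (m, Suc c, r)}"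
    and step: "(c' = c0 \<and> (h' = Suc h \<or> h = Suc h')) \<or> (h' = h \<and> M dvd h \<and> (c' = Suc c0 \<or> c0 = Suc c'))"
    using del_edge_induced_Yg_step[OF \<open>(x, y) \<in> A\<close> x(1)] by blast
  from step consider "c' = c0" "h' = Suc h" | "c' = c0" "h = Suc h'"
    | "h' = h" "M dvd h" "c' = Suc c0 \<or> c0 = Suc c'" by blast
  then have "Q c' \<and> h' < h1 \<and> (\<forall>h2. h' \<le> h2 \<longrightarrow> h2 \<le> r \<longrightarrow> occupied Q h2)"
  proof cases
    case 1
    then have "occupied Q h'" using y(1,3) x(2) by (auto simp: occupied_def)
    then have "h' \<noteq> h1" using h1(2) by auto
    then show ?thesis using 1 x(2,3) occ by auto
  next
    case 2
    then have "occupied Q h'" using y(1,3) x(2) by (auto simp: occupied_def)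
    have "occupied Q h2" if "h' \<le> h2" "h2 \<le> r" for h2
      using occ that \<open>occupied Q h'\<close> 2(2) by (cases "h2 = h'") auto
    then show ?thesis using 2 x(2,3) by auto
  next
    case 3
    have "\<not> r < h" using multiple_add_le[OF rung_height \<open>M dvd h\<close>] x(3) h1(1) by auto
    moreover have "\<not> h < r"
    proof
      assume "h < r"
      then have "h + M \<le> r" using multiple_add_le[OF \<open>M dvd h\<close> rung_height] by blast
      then obtain h2 where "r - M \<le> h2" "h2 \<le> r" "\<not> occupied Q h2" using gap_below by auto
      then show False using occ \<open>h + M \<le> r\<close> by auto
    qed
    ultimately have "h = r" by simp
    have "Q c'"
    proof (rule ccontr)
      assume "\<not> Q c'"
      then have "{c0, c'} = {c, Suc c}" using side x(2) 3(3) by blast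
      then show False using y(1,4) x(1) 3(1) \<open>h = r\<close> by (auto simp: doubleton_eq_iff)
    qed
    then show ?thesis using 3(1) x(3) occ by simp
  qed
  then show "y \<in> region Q h1" unfolding region_def y(1) by blast
qed

lemma window:
  assumes side: "\<And>c0 c'. Q c0 \<Longrightarrow> \<not> Q c' \<Longrightarrow> c' = Suc c0 \<or> c0 = Suc c' \<Longrightarrow> {c0, c'} = {c, Suc c}"
    and "(m, cs, r) \<in> W" "Q cs" "\<not> Q ct" and path: "((m, cs, r), (m, ct, r)) \<in> A\<^sup>*"
  shows "\<exists>lo. \<forall>h. lo \<le> h \<longrightarrow> h \<le> lo + M \<longrightarrow> occupied Q h"
proof (rule ccontr)
  assume no_window: "\<not> ?thesis"
  then obtain h1 where h1: "r \<le> h1" "h1 \<le> r + M" "\<not> occupied Q h1" by blast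
  have "occupied Q r" using assms(2,3) by (auto simp: occupied_def)
  then have "r < h1" using h1 le_neq_implies_less by blast
  have gap_below: "\<exists>h2. r - M \<le> h2 \<and> h2 \<le> r \<and> \<not> occupied Q h2" if "M \<le> r"
    using no_window that by (metis le_add_diff_inverse2)
  have "(m, cs, r) \<in> region Q h1"
    using \<open>r < h1\<close> \<open>Q cs\<close> \<open>occupied Q r\<close> unfolding region_def by auto
  then have "(m, ct, r) \<in> region Q h1"
    using rtrancl_stays_in[OF path] region_closed[OF side h1(2,3) gap_below] by blast
  then show False using \<open>\<not> Q ct\<close> unfolding region_def by simp
qed

lemma card_ge: "2 * M + 2 \<le> card W"
proof -
  have walk_back: "((m, Suc c, r), (m, c, r)) \<in> A\<^sup>*"
    using rtrancl_sym_swap[OF sym_del_edge[OF sym_induced_rel] walk] .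
  obtain lo1 where "\<forall>h. lo1 \<le> h \<longrightarrow> h \<le> lo1 + M \<longrightarrow> occupied (\<lambda>c'. c' \<le> c) h"
    using window[of "\<lambda>c'. c' \<le> c" c "Suc c"] left_in walk by force
  moreover obtain lo2 where "\<forall>h. lo2 \<le> h \<longrightarrow> h \<le> lo2 + M \<longrightarrow> occupied (\<lambda>c'. c < c') h"
    using window[of "\<lambda>c'. c < c'" "Suc c" c] right_in walk_back by force
  ultimately show ?thesis
    unfolding occupied_def
    by (intro card_ge_two_column_windows[OF finite_W, of "\<lambda>c'. c' \<le> c" "\<lambda>c'. c < c'"]) auto
qed

end

lemma Yg_cycle_card_ge:
  assumes "finite W" and edge: "{a, b} \<in> edges (Yg f)" and "a \<in> W" "b \<in> W"
    and walk: "(a, b) \<in> (del_edge (induced_rel (Yg f) W) a b)\<^sup>*"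
  shows "2 * ygap (fst a) + 2 \<le> card W"
proof -
  obtain m c h where a: "a = (m, c, h)" by (cases a)
  obtain m' c' h' where b: "b = (m', c', h')" by (cases b)
  have walk_back: "(b, a) \<in> (del_edge (induced_rel (Yg f) W) b a)\<^sup>*"
    using rtrancl_sym_swap[OF sym_del_edge[OF sym_induced_rel] walk] by (simp add: del_edge_commute)
  from Yg_edge_cases[OF edge[unfolded a b]] consider
      "m' = m" "c' = c" "h' = Suc h" | "m' = m" "c' = c" "h = Suc h'"
    | "m' = m" "h' = h" "ygap m dvd h" "c' = Suc c" | "m' = m" "h' = h" "ygap m dvd h" "c = Suc c'"
    by blast
  then show ?thesis
  proof cases
    case 1
    then show ?thesis using vertical_cycle.card_ge[of f W m c h] assms a b by (simp add: vertical_cycle_def)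
  next
    case 2
    then show ?thesis using vertical_cycle.card_ge[of f W m c h'] assms walk_back a b
      by (simp add: vertical_cycle_def)
  next
    case 3
    then show ?thesis using rung_cycle.card_ge[of f W m c h] assms a b by (simp add: rung_cycle_def)
  next
    case 4
    then show ?thesis using rung_cycle.card_ge[of f W m c' h] assms walk_back a b
      by (simp add: rung_cycle_def)
  qed
qed

section \<open>Coarse wirings of small volume\<close>

lemma nth_rtrancl:
  assumes "\<And>i. Suc i < length xs \<Longrightarrow> (xs ! i, xs ! Suc i) \<in> R" and "i < length xs"
  shows "(xs ! 0, xs ! i) \<in> R\<^sup>*"
  using assms(2)
proof (induction i)
  case (Suc i)
  then show ?case using assms(1) by (meson Suc_lessD rtrancl.rtrancl_into_rtrancl)
qed simp

lemma nth_invariant: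
  assumes "\<And>i. Suc i < length xs \<Longrightarrow> (xs ! i \<in> S \<longleftrightarrow> xs ! Suc i \<in> S)" and "i < length xs"
  shows "xs ! i \<in> S \<longleftrightarrow> xs ! 0 \<in> S"
  using assms(2) by (induction i) (use assms(1) in auto)

lemma square_le_double_exp: "n * n \<le> (2::nat) ^ 2 ^ (2 * n - 1)"
proof -
  have "2 * n - 1 < 2 ^ (2 * n - 1)" by (rule less_exp)
  then have "2 * n \<le> 2 ^ (2 * n - 1)" by arith
  have "n * n \<le> 2 ^ n * 2 ^ n" using less_exp[of n] by (intro mult_le_mono) auto
  also have "\<dots> = (2::nat) ^ (2 * n)" by (simp add: power_add[symmetric] mult_2)
  also have "\<dots> \<le> 2 ^ 2 ^ (2 * n - 1)" using \<open>2 * n \<le> 2 ^ (2 * n - 1)\<close> by (intro power_increasing) auto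
  finally show ?thesis .
qed

text \<open>The ladder \<open>X\<^sub>n\<close> has too many vertices to be mapped with fibres of size \<open>< F\<close> into a
  component \<open>Y\<^sub>m\<close> with \<open>m < n\<close>: both \<open>f m \<le> m < n\<close> and \<open>ygap m \<le> 2 ^ 2 ^ (2 n - 1)\<close>, the
  square root of the rung spacing \<open>L\<close> of \<open>X\<^sub>n\<close>.\<close>

lemma lower_ladder_too_small:
  assumes "2 \<le> n" "m < n" "fm \<le> m" "2 \<le> F"
  shows "(F - 1) * (fm * (ygap m * fm + 1)) < F * ((2::nat) ^ 2 ^ (2 * n) * F + 1)"
proof -
  define Q where "Q = (2::nat) ^ 2 ^ (2 * n - 1)"
  have "(2::nat) ^ (2 * n) = 2 ^ (2 * n - 1) * 2"
    using \<open>2 \<le> n\<close> by (metis Suc_diff_1 mult_2 add_gr_0 less_le_trans pos2 power_Suc2 zero_less_numeral)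
  then have LQ: "(2::nat) ^ 2 ^ (2 * n) = Q * Q"
    unfolding Q_def by (simp add: power_mult power2_eq_square)
  have "1 \<le> Q" unfolding Q_def by simp
  have "ygap m \<le> Q" unfolding ygap_def Q_def using \<open>m < n\<close> by (intro power_increasing) auto
  then have "ygap m * fm \<le> Q * m" using \<open>fm \<le> m\<close> by (rule mult_le_mono)
  moreover have "Q * Suc m \<le> Q * n" using \<open>m < n\<close> by (intro mult_le_mono2) simp
  ultimately have "ygap m * fm + 1 \<le> Q * n" using \<open>1 \<le> Q\<close> by simp
  then have "fm * (ygap m * fm + 1) \<le> n * (Q * n)"
    using \<open>fm \<le> m\<close> \<open>m < n\<close> by (intro mult_le_mono) auto
  also have "\<dots> = Q * (n * n)" by simp
  also have "\<dots> \<le> Q * Q" using square_le_double_exp[of n] unfolding Q_def by simp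
  finally have "(F - 1) * (fm * (ygap m * fm + 1)) \<le> (F - 1) * (Q * Q)" by simp
  also have "\<dots> \<le> F * (Q * Q * F)" using \<open>2 \<le> F\<close> by (simp add: mult_le_mono)
  also have "\<dots> < F * (Q * Q * F + 1)" using \<open>2 \<le> F\<close> by simp
  finally show ?thesis using LQ by simp
qed

locale small_wiring =
  fixes f :: "nat \<Rightarrow> nat" and n :: nat
    and \<phi> :: "nat \<times> nat \<Rightarrow> nat \<times> nat \<times> nat" and P :: "(nat \<times> nat) set \<Rightarrow> (nat \<times> nat \<times> nat) list"
  assumes n_ge: "2 \<le> n" and f_bounds: "\<forall>m\<ge>2. 2 \<le> f m \<and> f m \<le> m" and f_one: "f 1 = 1"
    and coarse: "coarse_wiring (f n - 1) (Xn f n) (Yg f) \<phi> P"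
    and small: "wiring_volume (Xn f n) \<phi> P \<le> 2 * ygap n"
begin

abbreviation "F \<equiv> f n"
abbreviation "L \<equiv> (2::nat) ^ 2 ^ (2 * n)"
abbreviation "XV \<equiv> ladder_verts F L"
abbreviation "XE \<equiv> ladder_edges F L"
abbreviation "I \<equiv> \<phi> ` XV \<union> (\<Union>e\<in>XE. set (P e))"
abbreviation "R \<equiv> induced_rel (Yg f) I"

lemma F_ge: "2 \<le> F"
  using f_bounds n_ge by auto

lemma Xn_eq: "verts (Xn f n) = XV" "edges (Xn f n) = XE"
  by (simp_all add: Xn_def ladder_eq verts_def edges_def)

lemma maps_to_Yg: "v \<in> XV \<Longrightarrow> \<phi> v \<in> verts (Yg f)"
  and path_wired: "e \<in> XE \<Longrightarrow> is_path (Yg f) (P e) \<and> {hd (P e), last (P e)} = \<phi> ` e"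
  and card_fibre_le: "y \<in> verts (Yg f) \<Longrightarrow> card {v \<in> XV. \<phi> v = y} \<le> F - 1"
  and congestion_le: "\<epsilon> \<in> edges (Yg f) \<Longrightarrow> card {e \<in> XE. \<epsilon> \<in> path_edges (P e)} \<le> F - 1"
  using coarse unfolding coarse_wiring_def wiring_def Xn_eq by blast+

lemma card_I_le: "card I \<le> 2 * ygap n"
  using small by (simp add: wiring_volume_def Xn_eq)

lemma finite_I: "finite I"
  using finite_ladder_verts finite_ladder_edges by auto

lemma I_subset_verts: "I \<subseteq> verts (Yg f)"
  using maps_to_Yg path_wired unfolding is_path_def by blast

lemma path_step:
  assumes "e \<in> XE" "Suc i < length (P e)"
  shows "(P e ! i, P e ! Suc i) \<in> R" "{P e ! i, P e ! Suc i} \<in> path_edges (P e)"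
proof -
  show pe: "{P e ! i, P e ! Suc i} \<in> path_edges (P e)"
    unfolding path_edges_def using assms(2) by blast
  then have "{P e ! i, P e ! Suc i} \<in> edges (Yg f)"
    using path_wired[OF assms(1)] unfolding is_path_def by blast
  moreover have "P e ! i \<in> set (P e)" "P e ! Suc i \<in> set (P e)"
    using assms(2) by auto
  then have "P e ! i \<in> I" "P e ! Suc i \<in> I"
    using assms(1) by blast+
  ultimately show "(P e ! i, P e ! Suc i) \<in> R" by (simp add: induced_rel_def)
qed

lemma path_from_hd:
  assumes "e \<in> XE" "w \<in> set (P e)"
  shows "(hd (P e), w) \<in> R\<^sup>*"
proof -
  obtain i where "i < length (P e)" "w = P e ! i" using assms(2) by (auto simp: in_set_conv_nth)
  moreover have "P e \<noteq> []" using assms(2) by auto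
  ultimately show ?thesis
    using nth_rtrancl[of "P e" R i] path_step(1)[OF assms(1)] by (simp add: hd_conv_nth)
qed

lemma edge_connected:
  assumes "e \<in> XE" "x \<in> e" "y \<in> e"
  shows "(\<phi> x, \<phi> y) \<in> R\<^sup>*"
proof -
  have ne: "P e \<noteq> []" using path_wired[OF assms(1)] by (simp add: is_path_def)
  then have "(hd (P e), last (P e)) \<in> R\<^sup>*" using path_from_hd[OF assms(1)] by simp
  moreover have "(last (P e), hd (P e)) \<in> R\<^sup>*"
    using rtrancl_sym_swap[OF sym_induced_rel calculation] .
  moreover have "\<phi> x \<in> {hd (P e), last (P e)}" "\<phi> y \<in> {hd (P e), last (P e)}"
    using path_wired[OF assms(1)] assms(2,3) by auto
  ultimately show ?thesis by auto
qed

lemma image_connected: "v \<in> XV \<Longrightarrow> (\<phi> (0, 0), \<phi> v) \<in> R\<^sup>*"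
proof -
  assume "v \<in> XV"
  then obtain i j where v: "v = (i, j)" "i < F" "j \<le> L * F" by (auto simp: ladder_verts_def)
  have "(\<phi> (i, 0), \<phi> (i, j')) \<in> R\<^sup>*" if "j' \<le> L * F" for j'
    using that
  proof (induction j')
    case (Suc j')
    have "{(i, j'), (i, Suc j')} \<in> XE" using Suc.prems v(2) by (intro ladder_vertical_edge) auto
    then have "(\<phi> (i, j'), \<phi> (i, Suc j')) \<in> R\<^sup>*" by (rule edge_connected) auto
    with Suc show ?case by (meson Suc_leD rtrancl_trans)
  qed simp
  moreover have "(\<phi> (0, 0), \<phi> (i', 0)) \<in> R\<^sup>*" if "i' < F" for i'
    using that
  proof (induction i')
    case (Suc i')
    have "{(i', 0), (Suc i', 0)} \<in> XE" using Suc.prems by (intro ladder_rung_edge) auto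
    then have "(\<phi> (i', 0), \<phi> (Suc i', 0)) \<in> R\<^sup>*" by (rule edge_connected) auto
    with Suc show ?case by (meson Suc_lessD rtrancl_trans)
  qed simp
  ultimately show ?thesis using v by (blast intro: rtrancl_trans)
qed

lemma I_connected: "w \<in> I \<Longrightarrow> (\<phi> (0, 0), w) \<in> R\<^sup>*"
proof (elim UnE)
  assume "w \<in> (\<Union>e\<in>XE. set (P e))"
  then obtain e where e: "e \<in> XE" "w \<in> set (P e)" by blast
  obtain x where "x \<in> e" "hd (P e) = \<phi> x" using path_wired[OF e(1)] by blast
  moreover have "x \<in> XV" using \<open>x \<in> e\<close> ladder_edge_subset[OF e(1)] by blast
  ultimately have "(\<phi> (0, 0), hd (P e)) \<in> R\<^sup>*"
    using image_connected by simp
  then show ?thesis using path_from_hd[OF e] by (rule rtrancl_trans)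
qed (use image_connected in blast)

definition layer :: nat where "layer = fst (\<phi> (0, 0))"

lemma fst_I: "w \<in> I \<Longrightarrow> fst w = layer"
proof -
  assume "w \<in> I"
  with I_connected have "(\<phi> (0, 0), w) \<in> R\<^sup>*" by blast
  then show ?thesis
  proof (induction rule: rtrancl_induct)
    case (step y z)
    obtain a b c a' b' c' where yz: "y = (a, b, c)" "z = (a', b', c')" by (cases y, cases z)
    then have "a' = a"
      using step.hyps(2) Yg_edge_cases[of a b c a' b' c' f] by (simp add: induced_rel_def)
    then show ?case using step.IH yz by simp
  qed (simp add: layer_def)
qed

lemma layer_ge_1: "1 \<le> layer"
proof -
  have "(0, 0) \<in> XV" using F_ge by (simp add: ladder_verts_def)
  then have "\<phi> (0, 0) \<in> verts (Yg f)" by (rule maps_to_Yg)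
  then show ?thesis unfolding layer_def by (cases "\<phi> (0, 0)") (simp add: Yg_verts_iff)
qed

lemma card_XV_le: "card XV \<le> card (\<phi> ` XV) * (F - 1)"
proof -
  have "card XV = card (\<Union>y\<in>\<phi> ` XV. {v \<in> XV. \<phi> v = y})"
    by (rule arg_cong[where f = card]) auto
  also have "\<dots> \<le> (\<Sum>y\<in>\<phi> ` XV. card {v \<in> XV. \<phi> v = y})"
    by (rule card_UN_le) (simp add: finite_ladder_verts)
  also have "\<dots> \<le> (\<Sum>y\<in>\<phi> ` XV. F - 1)"
  proof (rule sum_mono)
    fix y assume "y \<in> \<phi> ` XV"
    then show "card {v \<in> XV. \<phi> v = y} \<le> F - 1" using card_fibre_le maps_to_Yg by blast
  qed
  finally show ?thesis by simp
qed

lemma layer_ge: "n \<le> layer"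
proof (rule ccontr)
  assume "\<not> n \<le> layer"
  then have "layer < n" by simp
  have "f layer \<le> layer"
    using f_one f_bounds layer_ge_1 by (cases "layer = 1") auto
  have "\<phi> ` XV \<subseteq> (\<lambda>(c, h). (layer, c, h)) ` ({..<f layer} \<times> {..ygap layer * f layer})"
  proof
    fix y assume "y \<in> \<phi> ` XV"
    then have "fst y = layer" "y \<in> verts (Yg f)" using fst_I maps_to_Yg by auto
    then show "y \<in> (\<lambda>(c, h). (layer, c, h)) ` ({..<f layer} \<times> {..ygap layer * f layer})"
      by (cases y) (auto simp: Yg_verts_iff)
  qed
  then have "card (\<phi> ` XV) \<le> card ((\<lambda>(c, h). (layer, c, h)) ` ({..<f layer} \<times> {..ygap layer * f layer}))"
    by (rule card_mono[rotated]) simp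
  also have "\<dots> \<le> card ({..<f layer} \<times> {..ygap layer * f layer})" by (rule card_image_le) simp
  also have "\<dots> = f layer * (ygap layer * f layer + 1)" by (simp add: card_cartesian_product)
  finally have "card XV \<le> (f layer * (ygap layer * f layer + 1)) * (F - 1)"
    using card_XV_le by (meson le_trans mult_le_mono1)
  then show False
    using lower_ladder_too_small[OF n_ge \<open>layer < n\<close> \<open>f layer \<le> layer\<close> F_ge] card_ladder_verts
    by (simp add: mult.commute)
qed

lemma edge_is_bridge: "(t, u) \<in> R \<Longrightarrow> t \<notin> bridge_side R t u"
proof
  assume "(t, u) \<in> R" "t \<in> bridge_side R t u"
  then have "(u, t) \<in> (del_edge R u t)\<^sup>*" by (simp add: bridge_side_def del_edge_commute)
  moreover have "{u, t} \<in> edges (Yg f)" "u \<in> I" "t \<in> I"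
    using \<open>(t, u) \<in> R\<close> by (auto simp: induced_rel_def insert_commute)
  ultimately have "2 * ygap (fst u) + 2 \<le> card I" using Yg_cycle_card_ge[OF finite_I] by blast
  moreover have "ygap n \<le> ygap (fst u)" using fst_I[OF \<open>u \<in> I\<close>] layer_ge by (simp add: ygap_mono)
  ultimately show False using card_I_le by simp
qed

abbreviation "pullback t u \<equiv> {v \<in> XV. \<phi> v \<in> bridge_side R t u}"

text \<open>Every step of a wiring path other than \<open>{t, u}\<close> stays on one side of this bridge.\<close>

lemma boundary_edge_wired_through:
  assumes "e \<in> edge_boundary XE (pullback t u)"
  shows "{t, u} \<in> path_edges (P e)"
proof (rule ccontr)
  assume avoids: "{t, u} \<notin> path_edges (P e)"
  obtain x y where e: "e \<in> XE" "x \<in> e" "y \<in> e" "x \<in> pullback t u" "y \<notin> pullback t u"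
    using assms unfolding edge_boundary_def by blast
  have "y \<in> XV" using ladder_edge_subset[OF e(1)] e(3) by blast
  have "P e ! i \<in> bridge_side R t u \<longleftrightarrow> P e ! Suc i \<in> bridge_side R t u"
    if "Suc i < length (P e)" for i
  proof
    have step: "(P e ! i, P e ! Suc i) \<in> R" by (rule path_step(1)[OF e(1) that])
    have other: "{P e ! i, P e ! Suc i} \<noteq> {t, u}" using path_step(2)[OF e(1) that] avoids by auto
    show "P e ! Suc i \<in> bridge_side R t u" if "P e ! i \<in> bridge_side R t u"
      using bridge_side_step[OF that step other] .
    show "P e ! i \<in> bridge_side R t u" if "P e ! Suc i \<in> bridge_side R t u"
      using bridge_side_step[OF that symD[OF sym_induced_rel step]] other by (simp add: insert_commute)
  qed
  moreover have ne: "P e \<noteq> []" using path_wired[OF e(1)] by (simp add: is_path_def)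
  ultimately have "last (P e) \<in> bridge_side R t u \<longleftrightarrow> hd (P e) \<in> bridge_side R t u"
    using nth_invariant[of "P e" "bridge_side R t u" "length (P e) - 1"]
    by (simp add: hd_conv_nth last_conv_nth)
  moreover have "\<phi> x \<in> {hd (P e), last (P e)}" "\<phi> y \<in> {hd (P e), last (P e)}"
    using path_wired[OF e(1)] e(2,3) by auto
  ultimately show False using e(4,5) \<open>y \<in> XV\<close> by auto
qed

lemma card_boundary_pullback_less:
  assumes "(t, u) \<in> R"
  shows "card (edge_boundary XE (pullback t u)) < F"
proof -
  have "edge_boundary XE (pullback t u) \<subseteq> {e \<in> XE. {t, u} \<in> path_edges (P e)}"
  proof
    fix e assume "e \<in> edge_boundary XE (pullback t u)"
    then show "e \<in> {e \<in> XE. {t, u} \<in> path_edges (P e)}"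
      using boundary_edge_wired_through[of e] unfolding edge_boundary_def by blast
  qed
  then have "card (edge_boundary XE (pullback t u)) \<le> card {e \<in> XE. {t, u} \<in> path_edges (P e)}"
    using finite_ladder_edges by (intro card_mono) auto
  also have "\<dots> \<le> F - 1"
    using assms by (intro congestion_le) (simp add: induced_rel_def)
  finally show ?thesis using F_ge by simp
qed

definition has_full_column :: "nat \<times> nat \<times> nat \<Rightarrow> nat \<times> nat \<times> nat \<Rightarrow> bool" where
  "has_full_column t u \<longleftrightarrow> (\<exists>c<F. \<forall>h\<le>L * F. (c, h) \<in> pullback t u)"

lemma not_both_full_columns:
  assumes "(t, u) \<in> R"
  shows "\<not> (has_full_column t u \<and> has_full_column u t)"
proof
  assume full: "has_full_column t u \<and> has_full_column u t"
  obtain c where "c < F" "\<forall>h\<le>L * F. (c, h) \<in> pullback t u"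
    using full unfolding has_full_column_def by blast
  moreover have "1 \<le> L" by simp
  ultimately obtain k where "k \<le> F" and rung: "\<forall>c<F. (c, k * L) \<in> pullback t u"
    using full_column_imp_full_rung[OF _ card_boundary_pullback_less[OF assms]] by blast
  obtain c' where "c' < F" "\<forall>h\<le>L * F. (c', h) \<in> pullback u t"
    using full unfolding has_full_column_def by blast
  moreover have "k * L \<le> L * F" using \<open>k \<le> F\<close> by (simp add: mult.commute)
  ultimately have "(c', k * L) \<in> pullback u t \<inter> pullback t u" using rung by blast
  then show False
    using bridge_sides_disjoint[OF sym_induced_rel edge_is_bridge[OF assms]] by blast
qed

lemma card_neighbours_le: "card {w. (u, w) \<in> R} \<le> 4"
proof -
  obtain m c h where u: "u = (m, c, h)" by (cases u)
  have "{w. (u, w) \<in> R} \<subseteq> set [(m, c, Suc h), (m, c, h - 1), (m, Suc c, h), (m, c - 1, h)]"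
  proof
    fix w assume "w \<in> {w. (u, w) \<in> R}"
    moreover obtain m' c' h' where w: "w = (m', c', h')" by (cases w)
    ultimately show "w \<in> set [(m, c, Suc h), (m, c, h - 1), (m, Suc c, h), (m, c - 1, h)]"
      using Yg_edge_cases[of m c h m' c' h' f] u by (auto simp: induced_rel_def)
  qed
  then have "card {w. (u, w) \<in> R} \<le> card (set [(m, c, Suc h), (m, c, h - 1), (m, Suc c, h), (m, c - 1, h)])"
    by (intro card_mono) auto
  also have "\<dots> \<le> 4" using card_length[of "[(m, c, Suc h), (m, c, h - 1), (m, Suc c, h), (m, c - 1, h)]"] by simp
  finally show ?thesis .
qed

lemma ladder_covered_at:
  assumes "u \<in> I"
  shows "XV \<subseteq> {v \<in> XV. \<phi> v = u} \<union> (\<Union>w\<in>{w. (u, w) \<in> R}. pullback u w)"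
proof
  fix v assume "v \<in> XV"
  have "(u, \<phi> (0, 0)) \<in> R\<^sup>*" using rtrancl_sym_swap[OF sym_induced_rel I_connected[OF assms]] .
  then have "(u, \<phi> v) \<in> R\<^sup>*" using image_connected[OF \<open>v \<in> XV\<close>] by (rule rtrancl_trans)
  then have "\<phi> v = u \<or> (\<exists>w. (u, w) \<in> R \<and> \<phi> v \<in> bridge_side R u w)"
    using rtrancl_in_bridge_sides[OF sym_induced_rel edge_is_bridge] by blast
  then show "v \<in> {v \<in> XV. \<phi> v = u} \<union> (\<Union>w\<in>{w. (u, w) \<in> R}. pullback u w)"
    using \<open>v \<in> XV\<close> by blast
qed

theorem contradiction: False
proof -
  have "R \<subseteq> I \<times> I" by (auto simp: induced_rel_def)
  moreover have "\<phi> (0, 0) \<in> I" using F_ge by (simp add: ladder_verts_def)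
  ultimately have "\<exists>u\<in>I. \<forall>w. (u, w) \<in> R \<longrightarrow> \<not> has_full_column u w"
    by (rule exists_vertex_without_big_edge[OF sym_induced_rel irrefl_induced_Yg _ finite_I _
          edge_is_bridge not_both_full_columns])
  then obtain u where "u \<in> I" and no_full: "\<And>w. (u, w) \<in> R \<Longrightarrow> \<not> has_full_column u w"
    by blast
  define N where "N = {w. (u, w) \<in> R}"
  have "finite N" unfolding N_def using finite_I by (rule rev_finite_subset) (auto simp: induced_rel_def)
  have small: "4 * card (pullback u w) \<le> L * F\<^sup>2" if "w \<in> N" for w
  proof (rule card_small_boundary_set_le)
    have uw: "(u, w) \<in> R" using that by (simp add: N_def)
    show "card (edge_boundary XE (pullback u w)) < F" by (rule card_boundary_pullback_less[OF uw])
    show "\<forall>c<F. \<exists>h\<le>L * F. (c, h) \<notin> pullback u w"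
      using no_full[OF uw] unfolding has_full_column_def by blast
  qed auto
  have "card XV \<le> card ({v \<in> XV. \<phi> v = u} \<union> (\<Union>w\<in>N. pullback u w))"
    using ladder_covered_at[OF \<open>u \<in> I\<close>] \<open>finite N\<close> finite_ladder_verts unfolding N_def
    by (intro card_mono) auto
  also have "\<dots> \<le> card {v \<in> XV. \<phi> v = u} + card (\<Union>w\<in>N. pullback u w)"
    by (rule card_Un_le)
  also have "\<dots> \<le> (F - 1) + (\<Sum>w\<in>N. card (pullback u w))"
    using card_fibre_le[OF subsetD[OF I_subset_verts \<open>u \<in> I\<close>]] card_UN_le[OF \<open>finite N\<close>] by (rule add_mono)
  finally have "4 * card XV \<le> 4 * (F - 1) + 4 * (\<Sum>w\<in>N. card (pullback u w))"
    by simp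
  also have "\<dots> = 4 * (F - 1) + (\<Sum>w\<in>N. 4 * card (pullback u w))"
    by (simp add: sum_distrib_left)
  also have "\<dots> \<le> 4 * (F - 1) + card N * (L * F\<^sup>2)"
    using sum_mono[of N "\<lambda>w. 4 * card (pullback u w)" "\<lambda>_. L * F\<^sup>2"] small by simp
  also have "\<dots> \<le> 4 * (F - 1) + 4 * (L * F\<^sup>2)"
    using card_neighbours_le[of u] unfolding N_def by simp
  moreover have "card XV = L * F\<^sup>2 + F"
    by (simp add: card_ladder_verts power2_eq_square algebra_simps)
  ultimately show False using F_ge by linarith
qed

end

lemma coarse_wiring_Xn_volume_ge:
  assumes "2 \<le> n" and "\<forall>m\<ge>2. 2 \<le> f m \<and> f m \<le> m" and "f 1 = 1"
    and "coarse_wiring (f n - 1) (Xn f n) (Yg f) \<phi> P"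
  shows "2 * 2 ^ 2 ^ (2 * n + 1) + 1 \<le> wiring_volume (Xn f n) \<phi> P"
proof (rule ccontr)
  assume "\<not> ?thesis"
  then have "small_wiring f n \<phi> P"
    using assms by (simp add: small_wiring_def ygap_def)
  then show False by (rule small_wiring.contradiction)
qed


section \<open>The wiring profile\<close>

definition tag_graph :: "nat \<Rightarrow> 'v graph \<Rightarrow> (nat \<times> 'v) graph" where
  "tag_graph n G = (Pair n ` verts G, image (Pair n) ` edges G)"

lemma verts_tag_graph: "verts (tag_graph n G) = Pair n ` verts G"
  and edges_tag_graph: "edges (tag_graph n G) = image (Pair n) ` edges G"
  by (simp_all add: tag_graph_def verts_def edges_def)

lemma coarse_wiring_untag:
  assumes "coarse_wiring k (tag_graph n G) Y \<phi> P"
  shows "coarse_wiring k G Y (\<phi> \<circ> Pair n) (P \<circ> image (Pair n))"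
proof -
  have inj: "inj (Pair n)" "inj (image (Pair n))"
    by (auto simp: inj_def inj_image_eq_iff)
  have "{v \<in> Pair n ` verts G. \<phi> v = y} = Pair n ` {v \<in> verts G. \<phi> (n, v) = y}" for y
    by auto
  then have fibres: "card {v \<in> Pair n ` verts G. \<phi> v = y} = card {v \<in> verts G. \<phi> (n, v) = y}" for y
    using card_image[OF inj_on_subset[OF inj(1) subset_UNIV]] by simp
  have "{e \<in> image (Pair n) ` edges G. \<epsilon> \<in> path_edges (P e)}
      = image (Pair n) ` {e \<in> edges G. \<epsilon> \<in> path_edges (P (Pair n ` e))}" for \<epsilon>
    by auto
  then have loads: "card {e \<in> image (Pair n) ` edges G. \<epsilon> \<in> path_edges (P e)}
      = card {e \<in> edges G. \<epsilon> \<in> path_edges (P (Pair n ` e))}" for \<epsilon>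
    using card_image[OF inj_on_subset[OF inj(2) subset_UNIV]] by simp
  show ?thesis
    using assms unfolding coarse_wiring_def wiring_def
    by (simp add: fibres loads verts_tag_graph edges_tag_graph image_comp)
qed

lemma wiring_volume_untag:
  "wiring_volume G (\<phi> \<circ> Pair n) (P \<circ> image (Pair n)) = wiring_volume (tag_graph n G) \<phi> P"
  by (simp add: wiring_volume_def verts_tag_graph edges_tag_graph image_comp)

lemma subgraph_tag_Xn: "1 \<le> n \<Longrightarrow> subgraph (tag_graph n (Xn f n)) (Xg f)"
  unfolding subgraph_def verts_tag_graph edges_tag_graph
  by (auto simp: Xg_def dunion_def verts_def edges_def Xn_def ladder_eq
      dest: ladder_edge_subset)

lemma card_verts_Xn: "card (verts (Xn f n)) = (2 ^ 2 ^ (2 * n) * f n + 1) * f n"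
  by (simp add: Xn_def ladder_eq verts_def card_ladder_verts)

lemma wir_fun_Xg_ge:
  assumes "2 \<le> n" and "\<forall>m\<ge>2. 2 \<le> f m \<and> f m \<le> m" and "f 1 = 1"
  shows "enat (2 ^ 2 ^ (2 * n + 1)) \<le> wir_fun (f n - 1) (Xg f) (Yg f) (card (verts (Xn f n)))"
proof -
  let ?\<Gamma> = "tag_graph n (Xn f n)"
  have "enat (2 ^ 2 ^ (2 * n + 1)) \<le> wir (f n - 1) ?\<Gamma> (Yg f)"
    unfolding wir_def
  proof (rule INF_greatest, clarify)
    fix \<phi> P assume "coarse_wiring (f n - 1) ?\<Gamma> (Yg f) \<phi> P"
    then have "2 ^ 2 ^ (2 * n + 1) \<le> wiring_volume (Xn f n) (\<phi> \<circ> Pair n) (P \<circ> image (Pair n))"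
      using coarse_wiring_Xn_volume_ge[OF assms coarse_wiring_untag] by fastforce
    then show "enat (2 ^ 2 ^ (2 * n + 1)) \<le> enat (wiring_volume ?\<Gamma> (fst (\<phi>, P)) (snd (\<phi>, P)))"
      by (simp add: wiring_volume_untag)
  qed
  also have "\<dots> \<le> wir_fun (f n - 1) (Xg f) (Yg f) (card (verts (Xn f n)))"
    unfolding wir_fun_def
  proof (rule SUP_upper, intro CollectI conjI)
    show "subgraph ?\<Gamma> (Xg f)" using assms(1) by (intro subgraph_tag_Xn) simp
    have "inj_on (Pair n) (verts (Xn f n))" by (simp add: inj_on_def)
    then show "card (verts ?\<Gamma>) \<le> card (verts (Xn f n))"
      by (simp add: verts_tag_graph card_image)
    show "finite (verts ?\<Gamma>)"
      unfolding verts_tag_graph by (simp add: Xn_def ladder_eq verts_def finite_ladder_verts)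
  qed
  finally show ?thesis .
qed

lemma double_exp_ge_square_ratio:
  assumes "2 \<le> (F::nat)"
  shows "(real ((2 ^ 2 ^ (2 * n) * F + 1) * F) / real (F * (F + 1)))\<^sup>2 \<le> real (2 ^ 2 ^ (2 * n + 1))"
proof -
  define L :: nat where "L = 2 ^ 2 ^ (2 * n)"
  have "1 \<le> L" by (simp add: L_def)
  have "(L * F + 1) * F = L * F * F + F" by (simp add: algebra_simps)
  also have "\<dots> \<le> L * F * F + L * F" using \<open>1 \<le> L\<close> by simp
  also have "\<dots> = L * (F * (F + 1))" by (simp add: algebra_simps)
  finally have "real ((L * F + 1) * F) \<le> real L * real (F * (F + 1))"
    by (simp only: of_nat_le_iff of_nat_mult[symmetric])
  moreover have "0 < real (F * (F + 1))" using assms by (simp only: of_nat_0_less_iff) simp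
  ultimately have "real ((L * F + 1) * F) / real (F * (F + 1)) \<le> real L"
    by (simp only: pos_divide_le_eq)
  then have "(real ((L * F + 1) * F) / real (F * (F + 1)))\<^sup>2 \<le> (real L)\<^sup>2"
    by (rule power_mono) simp
  also have "\<dots> = real (2 ^ 2 ^ (2 * n + 1))"
    by (simp add: L_def power2_eq_square power_add[symmetric] mult_2)
  finally show ?thesis unfolding L_def .
qed

theorem lemma3p1:
  fixes f :: "nat \<Rightarrow> nat" and n :: nat
  assumes f_surj: "\<forall>k\<ge>1. \<exists>m\<ge>1. f m = k"
    and f_one: "f 1 = 1"
    and f_bounds: "\<forall>m\<ge>2. 2 \<le> f m \<and> f m \<le> m"
    and f_inf: "\<forall>k\<ge>2. infinite {m. 1 \<le> m \<and> f m = k}"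
    and n2: "n \<ge> 2"
  shows "(\<forall>(\<phi> :: nat \<times> nat \<Rightarrow> nat \<times> nat \<times> nat) (P :: (nat \<times> nat) set \<Rightarrow> (nat \<times> nat \<times> nat) list).
            coarse_wiring (f n - 1) (Xn f n) (Yg f) \<phi> P \<longrightarrow>
            wiring_volume (Xn f n) \<phi> P \<ge> 2 * 2 ^ 2 ^ (2 * n + 1) + 1)
       \<and> card (verts (Xn f n)) = (2 ^ 2 ^ (2 * n) * f n + 1) * f n
       \<and> wir_fun (f n - 1) (Xg f) (Yg f) (card (verts (Xn f n))) \<ge> enat (2 ^ 2 ^ (2 * n + 1))
       \<and> real (2 ^ 2 ^ (2 * n + 1)) \<ge> (real (card (verts (Xn f n))) / real (f n * (f n + 1))) ^ 2"
proof (intro conjI allI impI)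
  fix \<phi> P assume "coarse_wiring (f n - 1) (Xn f n) (Yg f) \<phi> P"
  then show "wiring_volume (Xn f n) \<phi> P \<ge> 2 * 2 ^ 2 ^ (2 * n + 1) + 1"
    by (rule coarse_wiring_Xn_volume_ge[OF n2 f_bounds f_one])
next
  show "wir_fun (f n - 1) (Xg f) (Yg f) (card (verts (Xn f n))) \<ge> enat (2 ^ 2 ^ (2 * n + 1))"
    by (rule wir_fun_Xg_ge[OF n2 f_bounds f_one])
next
  have "2 \<le> f n" using f_bounds n2 by blast
  then show "real (2 ^ 2 ^ (2 * n + 1)) \<ge> (real (card (verts (Xn f n))) / real (f n * (f n + 1))) ^ 2"
    unfolding card_verts_Xn by (rule double_exp_ge_square_ratio)
qed (rule card_verts_Xn)

end
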